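(* Let $\alpha>1$, $s>0$, $L\ge1$. The GAP model is edge $(\alpha,\frac{L\alpha}{2s^2})$-GDP: for every $v\in[n]\setminus[m]$ and every pair of edge-level adjacent datasets $\mathcal{D},\mathcal{D}'$, $D_\alpha(\mathcal{M}(v;\mathcal{D})\,\|\,\mathcal{M}(v;\mathcal{D}'))\le\frac{L\alpha}{2s^2}$.
   Context: A graph dataset is $\mathcal{D}=(\mathbf{X},\mathbf{Y},\mathbf{A})$ with node set $[n]$, $\mathbf{X}\in\mathbb{R}^{n\times F}$, $\mathbf{Y}\in\{0,1\}^{m\times C}$ (labels of nodes $1,\dots,m$; nodes in $[n]\setminus[m]$ are to be predicted), and $\mathbf{A}\in\{0,1\}^{n\times n}$ the adjacency matrix of a directed graph without self-loops. Edge-level adjacency: same $\mathbf{X},\mathbf{Y}$, adjacency matrices differing in exactly one entry. Rényi divergence of order $\alpha>1$: $D_\alpha(X\|Y)=\frac{1}{\alpha-1}\log\mathbb{E}_{x\sim Q}[(P(x)/Q(x))^\alpha]$. Row-normalization divides each row by its Euclidean norm. GAP model (edge setting): $\mathbf{W}^{(X)}$ is a random weight whose distribution depends only on $(\mathbf{X},\mathbf{Y})$; $f(\cdot;\mathbf{W})$ is a map whose $i$-th output row depends only on $\mathbf{X}_i$ and $\mathbf{W}$; $\mathbf{H}^{(0)}=\text{row-normalization}(f(\mathbf{X};\mathbf{W}^{(X)}))$, $\mathbf{H}^{(l+1)}=\text{row-normalization}(\mathbf{A}\mathbf{H}^{(l)}+\mathbf{N}^{(l)})$ for $l=0,\dots,L-1$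 with independent noise matrices having i.i.d. $\mathcal{N}(0,s^2)$ entries; $\mathbf{Z}=\mathbf{H}^{(0)}\Vert\cdots\Vert\mathbf{H}^{(L)}$; $\Theta=\mathcal{B}(\mathbf{Y},\mathbf{Z})$ for a randomized algorithm $\mathcal{B}$ with independent internal randomness; $\widehat{\mathbf{Y}}_v=g(\Theta,\mathbf{Z}_v)$ for a fixed deterministic $g$; and $\mathcal{M}(v;\mathcal{D})=(\widehat{\mathbf{Y}}_v,(\mathbf{W}^{(X)},\Theta))$. *)

theory Defs
  imports "HOL-Probability.Probability"
begin

definition renyi_integral :: "real \<Rightarrow> 'a measure \<Rightarrow> 'a measure \<Rightarrow> ennreal" where
  "renyi_integral \<alpha> P Q = (\<integral>\<^sup>+ x. ennreal ((enn2real (RN_deriv Q P x)) powr \<alpha>) \<partial>Q)"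

definition renyi_divergence :: "real \<Rightarrow> 'a measure \<Rightarrow> 'a measure \<Rightarrow> ereal" where
  "renyi_divergence \<alpha> P Q =
     (if sets P = sets Q \<and> absolutely_continuous Q P \<and> renyi_integral \<alpha> P Q \<noteq> \<infinity>
      then ereal (ln (enn2real (renyi_integral \<alpha> P Q)) / (\<alpha> - 1))
      else \<infinity>)"

text \<open>Adjacency matrices are \<open>nat \<Rightarrow> nat \<Rightarrow> bool\<close>; only the block below n is meaningful.\<close>

definition loopless :: "nat \<Rightarrow> (nat \<Rightarrow> nat \<Rightarrow> bool) \<Rightarrow> bool" where
  "loopless n A = (\<forall>i<n. \<not> A i i)"

definition edge_adjacent :: "nat \<Rightarrow> (nat \<Rightarrow> nat \<Rightarrow> bool) \<Rightarrow> (nat \<Rightarrow> nat \<Rightarrow> bool) \<Rightarrow> bool" where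
  "edge_adjacent n A A' =
     (loopless n A \<and> loopless n A' \<and>
      card {(i, j). i < n \<and> j < n \<and> A i j \<noteq> A' i j} = 1)"

text \<open>Edge-level (alpha, eps)-GDP of a node-indexed mechanism M X Y A v (an output distribution):
  for every unlabelled node v (m <= v < n) and every pair of edge-level adjacent datasets
  (same X, Y; adjacency matrices differing in exactly one entry).\<close>

definition edge_GDP ::
  "nat \<Rightarrow> nat \<Rightarrow> real \<Rightarrow> real \<Rightarrow>
   ((nat \<Rightarrow> nat \<Rightarrow> real) \<Rightarrow> (nat \<Rightarrow> nat \<Rightarrow> bool) \<Rightarrow> (nat \<Rightarrow> nat \<Rightarrow> bool) \<Rightarrow> nat \<Rightarrow> 'o measure)
   \<Rightarrow> bool" where
  "edge_GDP n m \<alpha> \<epsilon> M =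
     (\<forall>v X Y A A'. m \<le> v \<and> v < n \<and> edge_adjacent n A A' \<longrightarrow>
        renyi_divergence \<alpha> (M X Y A v) (M X Y A' v) \<le> ereal \<epsilon>)"

text \<open>Measurable spaces: a row is \<open>nat \<Rightarrow> real\<close> (entries j < d meaningful), a matrix is
  \<open>nat \<Rightarrow> nat \<Rightarrow> real\<close> (row, column), the noise is \<open>nat \<Rightarrow> nat \<Rightarrow> nat \<Rightarrow> real\<close> (layer, row, column).\<close>

definition RowS :: "(nat \<Rightarrow> real) measure" where
  "RowS = (\<Pi>\<^sub>M j\<in>UNIV. borel)"

definition MatS :: "(nat \<Rightarrow> nat \<Rightarrow> real) measure" where
  "MatS = (\<Pi>\<^sub>M i\<in>UNIV. RowS)"

definition NoiseS :: "(nat \<Rightarrow> nat \<Rightarrow> nat \<Rightarrow> real) measure" where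
  "NoiseS = (\<Pi>\<^sub>M l\<in>UNIV. MatS)"

definition row_normalize :: "nat \<Rightarrow> (nat \<Rightarrow> real) \<Rightarrow> (nat \<Rightarrow> real)" where
  "row_normalize d h = (\<lambda>j. if j < d then h j / sqrt (\<Sum>k<d. (h k)\<^sup>2) else 0)"

definition gauss_noise :: "nat \<Rightarrow> nat \<Rightarrow> nat \<Rightarrow> real \<Rightarrow> (nat \<Rightarrow> nat \<Rightarrow> nat \<Rightarrow> real) measure" where
  "gauss_noise L n d s =
     distr (\<Pi>\<^sub>M idx\<in>{..<L} \<times> {..<n} \<times> {..<d}. density lborel (normal_density 0 s)) NoiseS
       (\<lambda>N l i j. if l < L \<and> i < n \<and> j < d then N (l, i, j) else 0)"

primrec gap_H ::
  "nat \<Rightarrow> nat \<Rightarrow> ('w \<Rightarrow> (nat \<Rightarrow> real) \<Rightarrow> (nat \<Rightarrow> real)) \<Rightarrow> (nat \<Rightarrow> nat \<Rightarrow> bool) \<Rightarrow>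
   (nat \<Rightarrow> nat \<Rightarrow> real) \<Rightarrow> 'w \<Rightarrow> (nat \<Rightarrow> nat \<Rightarrow> nat \<Rightarrow> real) \<Rightarrow> nat \<Rightarrow> nat \<Rightarrow> nat \<Rightarrow> real" where
  "gap_H n d f A X w N 0 =
     (\<lambda>i. if i < n then row_normalize d (f w (X i)) else (\<lambda>_. 0))"
| "gap_H n d f A X w N (Suc l) =
     (\<lambda>i. if i < n then
            row_normalize d (\<lambda>j. (\<Sum>k<n. (if A i k then 1 else 0) * gap_H n d f A X w N l k j) + N l i j)
          else (\<lambda>_. 0))"

text \<open>Z = H^(0) || ... || H^(L) (an n x (L+1)d matrix).\<close>

definition gap_Z ::
  "nat \<Rightarrow> nat \<Rightarrow> nat \<Rightarrow> ('w \<Rightarrow> (nat \<Rightarrow> real) \<Rightarrow> (nat \<Rightarrow> real)) \<Rightarrow> (nat \<Rightarrow> nat \<Rightarrow> bool) \<Rightarrow>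
   (nat \<Rightarrow> nat \<Rightarrow> real) \<Rightarrow> 'w \<Rightarrow> (nat \<Rightarrow> nat \<Rightarrow> nat \<Rightarrow> real) \<Rightarrow> nat \<Rightarrow> nat \<Rightarrow> real" where
  "gap_Z L n d f A X w N =
     (\<lambda>i c. if i < n \<and> c < (L + 1) * d then gap_H n d f A X w N (c div d) i (c mod d) else 0)"

text \<open>The mechanism M(v; (X, Y, A)) = (g(Theta, Z_v), (W, Theta)), as an output distribution:
  W ~ WX X Y, noise ~ gauss_noise, Theta ~ B Y Z, all independent.\<close>

definition gap_mech ::
  "nat \<Rightarrow> nat \<Rightarrow> nat \<Rightarrow> real \<Rightarrow>
   ((nat \<Rightarrow> nat \<Rightarrow> real) \<Rightarrow> (nat \<Rightarrow> nat \<Rightarrow> bool) \<Rightarrow> 'w measure) \<Rightarrow>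
   ('w \<Rightarrow> (nat \<Rightarrow> real) \<Rightarrow> (nat \<Rightarrow> real)) \<Rightarrow>
   ((nat \<Rightarrow> nat \<Rightarrow> bool) \<Rightarrow> (nat \<Rightarrow> nat \<Rightarrow> real) \<Rightarrow> 't measure) \<Rightarrow>
   ('t \<Rightarrow> (nat \<Rightarrow> real) \<Rightarrow> 'y) \<Rightarrow>
   'w measure \<Rightarrow> 't measure \<Rightarrow> 'y measure \<Rightarrow>
   (nat \<Rightarrow> nat \<Rightarrow> real) \<Rightarrow> (nat \<Rightarrow> nat \<Rightarrow> bool) \<Rightarrow> (nat \<Rightarrow> nat \<Rightarrow> bool) \<Rightarrow> nat \<Rightarrow>
   ('y \<times> ('w \<times> 't)) measure" where
  "gap_mech L n d s WX f B g MW MT MY X Y A v =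
     bind (WX X Y) (\<lambda>w.
       bind (gauss_noise L n d s) (\<lambda>N.
         bind (B Y (gap_Z L n d f A X w N)) (\<lambda>\<theta>.
           return (MY \<Otimes>\<^sub>M (MW \<Otimes>\<^sub>M MT)) (g \<theta> (gap_Z L n d f A X w N v), (w, \<theta>)))))"

end

(*
  Flipping the edge (i0, k0) changes, in every layer, the aggregate of row i0 by plus or minus row k0
  of the previous hidden layer, a vector of norm at most 1 because hidden rows are normalised.  So the
  mechanism for A is the mechanism for A' run on shifted noise, where the shift of layer l has norm at
  most 1 and is a measurable function of the noise of the layers below l.  Such an adaptively shifted
  Gaussian vector has a density r with respect to the unshifted one, and E[r^alpha] is at most
  exp(alpha (alpha - 1) / (2 s^2)) per layer.  Everything else (weights, Theta, prediction) is
  post-processing, and post-processing a density r gives D_alpha <= ln E[r^alpha] / (alpha - 1).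
*)

theory Submission
  imports Defs
begin

section \<open>Renyi divergence of a post-processed density\<close>

lemma mult_powr_le_Young:
  fixes \<alpha> a b :: real
  assumes "\<alpha> > 1" "a \<ge> 0" "b \<ge> 0"
  shows "a * b powr (\<alpha> - 1) \<le> a powr \<alpha> / \<alpha> + (\<alpha> - 1) / \<alpha> * b powr \<alpha>"
proof -
  define q where "q = \<alpha> / (\<alpha> - 1)"
  have q: "q > 1" "1 / \<alpha> + 1 / q = 1" using assms by (simp_all add: q_def field_simps)
  have "a * b powr (\<alpha> - 1) \<le> a powr \<alpha> / \<alpha> + (b powr (\<alpha> - 1)) powr q / q"
    using Youngs_inequality[OF assms(1) q assms(2)] by simp
  also have "(b powr (\<alpha> - 1)) powr q / q = (\<alpha> - 1) / \<alpha> * b powr \<alpha>"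
    using assms by (simp add: powr_powr q_def)
  finally show ?thesis .
qed

lemma powr_le_mult_powr_minus_one:
  fixes m u :: real
  assumes "0 \<le> m" "m \<le> u"
  shows "m powr \<alpha> \<le> u * m powr (\<alpha> - 1)"
proof -
  have "m powr \<alpha> = m powr (\<alpha> - 1) * m" using assms(1) powr_add[of m "\<alpha> - 1" 1] by simp
  also have "\<dots> \<le> m powr (\<alpha> - 1) * u" using assms by (intro mult_left_mono) auto
  finally show ?thesis by (simp add: mult.commute)
qed

lemma nn_integral_powr_bind_density_le:
  fixes \<kappa> :: "'a \<Rightarrow> 'b measure"
  assumes \<alpha>: "\<alpha> > 1"
    and r[measurable]: "r \<in> borel_measurable Q0" and r_nn: "\<And>x. x \<in> space Q0 \<Longrightarrow> r x \<ge> 0"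
    and \<kappa>: "\<kappa> \<in> Q0 \<rightarrow>\<^sub>M prob_algebra \<Omega>"
    and h[measurable]: "h \<in> borel_measurable \<Omega>" and h_nn: "\<And>y. h y \<ge> 0"
  shows "(\<integral>\<^sup>+y. ennreal (h y powr (\<alpha> - 1)) \<partial>bind (density Q0 (\<lambda>x. ennreal (r x))) \<kappa>)
     \<le> ennreal (1 / \<alpha>) * (\<integral>\<^sup>+x. ennreal (r x powr \<alpha>) \<partial>Q0)
       + ennreal ((\<alpha> - 1) / \<alpha>) * (\<integral>\<^sup>+y. ennreal (h y powr \<alpha>) \<partial>bind Q0 \<kappa>)"
proof -
  have \<kappa>_sub[measurable]: "\<kappa> \<in> Q0 \<rightarrow>\<^sub>M subprob_algebra \<Omega>"
    using \<kappa> by (rule measurable_prob_algebraD)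
  have \<kappa>_prob: "prob_space (\<kappa> x)" and \<kappa>_sets: "sets (\<kappa> x) = sets \<Omega>" if "x \<in> space Q0" for x
    using measurable_space[OF \<kappa> that] by (simp_all add: space_prob_algebra)
  have "(\<integral>\<^sup>+y. ennreal (h y powr (\<alpha> - 1)) \<partial>bind (density Q0 r) \<kappa>)
      = (\<integral>\<^sup>+x. ennreal (r x) * \<integral>\<^sup>+y. ennreal (h y powr (\<alpha> - 1)) \<partial>\<kappa> x \<partial>Q0)"
    by (subst nn_integral_bind[where B=\<Omega>]) (simp_all add: nn_integral_density)
  also have "\<dots> = (\<integral>\<^sup>+x. \<integral>\<^sup>+y. ennreal (r x * h y powr (\<alpha> - 1)) \<partial>\<kappa> x \<partial>Q0)"
    by (intro nn_integral_cong) (simp add: nn_integral_cmult[symmetric] ennreal_mult' r_nn)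
  also have "\<dots> \<le> (\<integral>\<^sup>+x. \<integral>\<^sup>+y. ennreal (r x powr \<alpha> / \<alpha>)
                 + ennreal ((\<alpha> - 1) / \<alpha>) * ennreal (h y powr \<alpha>) \<partial>\<kappa> x \<partial>Q0)"
  proof (intro nn_integral_mono)
    fix x y assume "x \<in> space Q0"
    then have "r x * h y powr (\<alpha> - 1) \<le> r x powr \<alpha> / \<alpha> + (\<alpha> - 1) / \<alpha> * h y powr \<alpha>"
      by (intro mult_powr_le_Young \<alpha> r_nn h_nn)
    then show "ennreal (r x * h y powr (\<alpha> - 1))
        \<le> ennreal (r x powr \<alpha> / \<alpha>) + ennreal ((\<alpha> - 1) / \<alpha>) * ennreal (h y powr \<alpha>)"
      using \<alpha> by (simp add: ennreal_mult'[symmetric] ennreal_plus[symmetric] ennreal_leI del: ennreal_plus)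
  qed
  also have "\<dots> = (\<integral>\<^sup>+x. ennreal (r x powr \<alpha> / \<alpha>)
                   + ennreal ((\<alpha> - 1) / \<alpha>) * \<integral>\<^sup>+y. ennreal (h y powr \<alpha>) \<partial>\<kappa> x \<partial>Q0)"
  proof (intro nn_integral_cong)
    fix x assume x: "x \<in> space Q0"
    interpret prob_space "\<kappa> x" using \<kappa>_prob[OF x] .
    have [measurable]: "h \<in> borel_measurable (\<kappa> x)"
      using h by (simp add: measurable_cong_sets[OF \<kappa>_sets[OF x] refl])
    show "(\<integral>\<^sup>+y. ennreal (r x powr \<alpha> / \<alpha>) + ennreal ((\<alpha> - 1) / \<alpha>) * ennreal (h y powr \<alpha>) \<partial>\<kappa> x)
        = ennreal (r x powr \<alpha> / \<alpha>) + ennreal ((\<alpha> - 1) / \<alpha>) * \<integral>\<^sup>+y. ennreal (h y powr \<alpha>) \<partial>\<kappa> x"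
      by (subst nn_integral_add) (auto simp: nn_integral_cmult emeasure_space_1)
  qed
  also have "\<dots> = ennreal (1 / \<alpha>) * (\<integral>\<^sup>+x. ennreal (r x powr \<alpha>) \<partial>Q0)
                 + ennreal ((\<alpha> - 1) / \<alpha>) * (\<integral>\<^sup>+y. ennreal (h y powr \<alpha>) \<partial>bind Q0 \<kappa>)"
    using \<alpha> by (subst nn_integral_add)
      (auto simp: nn_integral_cmult[symmetric] nn_integral_bind[where B=\<Omega>] ennreal_mult'[symmetric]
            intro!: nn_integral_cong)
  finally show ?thesis .
qed

lemma ennreal_le_of_le_convex_comb:
  fixes a b :: ennreal
  assumes \<alpha>: "\<alpha> > 1" and a: "a \<noteq> \<infinity>"
    and le: "a \<le> ennreal (1 / \<alpha>) * b + ennreal ((\<alpha> - 1) / \<alpha>) * a"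
  shows "a \<le> b"
proof (cases "b = \<infinity>")
  case False
  obtain a' where a': "a = ennreal a'" "a' \<ge> 0" using a by (cases a) auto
  obtain b' where b': "b = ennreal b'" "b' \<ge> 0" using False by (cases b) auto
  have "ennreal a' \<le> ennreal (1 / \<alpha> * b' + (\<alpha> - 1) / \<alpha> * a')"
    using le \<alpha> a' b' by (simp add: ennreal_mult'[symmetric] ennreal_plus[symmetric] del: ennreal_plus)
  then have "a' \<le> 1 / \<alpha> * b' + (\<alpha> - 1) / \<alpha> * a'"
    using \<alpha> a' b' by (subst (asm) ennreal_le_iff) auto
  then have "a' \<le> b'" using \<alpha> by (simp add: field_simps)
  then show ?thesis using a' b' by (simp add: ennreal_leI)
qed simp

lemma nn_integral_powr_le_of_truncations:
  fixes u :: "'a \<Rightarrow> real"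
  assumes \<alpha>: "\<alpha> > 1" and Q: "finite_measure Q"
    and u[measurable]: "u \<in> borel_measurable Q" and u_nn: "\<And>x. u x \<ge> 0"
    and R: "R \<noteq> \<infinity>"
    and trunc: "\<And>k::nat. (\<integral>\<^sup>+x. ennreal (min (u x) k powr \<alpha>) \<partial>Q)
      \<le> ennreal (1 / \<alpha>) * R + ennreal ((\<alpha> - 1) / \<alpha>) * (\<integral>\<^sup>+x. ennreal (min (u x) k powr \<alpha>) \<partial>Q)"
  shows "(\<integral>\<^sup>+x. ennreal (u x powr \<alpha>) \<partial>Q) \<le> R"
proof -
  interpret finite_measure Q by fact
  have trunc_le: "(\<integral>\<^sup>+x. ennreal (min (u x) k powr \<alpha>) \<partial>Q) \<le> R" for k :: nat
  proof -
    have "(\<integral>\<^sup>+x. ennreal (min (u x) k powr \<alpha>) \<partial>Q) \<le> (\<integral>\<^sup>+x. ennreal (real k powr \<alpha>) \<partial>Q)"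
      using \<alpha> u_nn by (intro nn_integral_mono ennreal_leI powr_mono2) auto
    also have "\<dots> < \<infinity>"
      using finite_emeasure_space by (simp add: ennreal_mult_eq_top_iff less_top[symmetric])
    finally have "(\<integral>\<^sup>+x. ennreal (min (u x) k powr \<alpha>) \<partial>Q) \<noteq> \<infinity>" by simp
    then show ?thesis by (rule ennreal_le_of_le_convex_comb[OF \<alpha> _ trunc])
  qed
  have "(\<integral>\<^sup>+x. ennreal (u x powr \<alpha>) \<partial>Q) = (\<integral>\<^sup>+x. (SUP k::nat. ennreal (min (u x) k powr \<alpha>)) \<partial>Q)"
  proof (intro nn_integral_cong antisym)
    fix x
    obtain k :: nat where "u x \<le> real k" using real_arch_simple by blast
    then have "min (u x) (real k) = u x" by simp
    then show "ennreal (u x powr \<alpha>) \<le> (SUP k::nat. ennreal (min (u x) k powr \<alpha>))"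
      by (intro SUP_upper2[of k]) simp_all
    show "(SUP k::nat. ennreal (min (u x) k powr \<alpha>)) \<le> ennreal (u x powr \<alpha>)"
      using \<alpha> u_nn by (intro SUP_least ennreal_leI powr_mono2) auto
  qed
  also have "\<dots> = (SUP k::nat. \<integral>\<^sup>+x. ennreal (min (u x) k powr \<alpha>) \<partial>Q)"
    using \<alpha> u_nn
    by (intro nn_integral_monotone_convergence_SUP)
       (auto simp: incseq_def le_fun_def intro!: ennreal_leI powr_mono2)
  also have "\<dots> \<le> R" by (intro SUP_least trunc_le)
  finally show ?thesis .
qed

lemma
  fixes \<kappa> :: "'a \<Rightarrow> 'b measure"
  assumes Q0: "prob_space Q0" and r[measurable]: "r \<in> borel_measurable Q0"
    and \<kappa>: "\<kappa> \<in> Q0 \<rightarrow>\<^sub>M subprob_algebra \<Omega>"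
  shows sets_bind_density: "sets (bind (density Q0 r) \<kappa>) = sets (bind Q0 \<kappa>)"
    and absolutely_continuous_bind_density: "absolutely_continuous (bind Q0 \<kappa>) (bind (density Q0 r) \<kappa>)"
proof -
  interpret prob_space Q0 by fact
  have \<kappa>': "\<kappa> \<in> density Q0 r \<rightarrow>\<^sub>M subprob_algebra \<Omega>"
    using \<kappa> by (simp add: measurable_cong_sets[OF sets_density refl])
  have nonempty: "space (density Q0 r) \<noteq> {}" by (simp add: not_empty)
  have sets: "sets (bind Q0 \<kappa>) = sets \<Omega>" "sets (bind (density Q0 r) \<kappa>) = sets \<Omega>"
    using sets_bind[OF sets_kernel[OF \<kappa>] not_empty] sets_bind[OF sets_kernel[OF \<kappa>'] nonempty] by auto
  then show "sets (bind (density Q0 r) \<kappa>) = sets (bind Q0 \<kappa>)" by simp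
  show "absolutely_continuous (bind Q0 \<kappa>) (bind (density Q0 r) \<kappa>)"
    unfolding absolutely_continuous_def
  proof
    fix E assume "E \<in> null_sets (bind Q0 \<kappa>)"
    then have E: "E \<in> sets \<Omega>" and E0: "emeasure (bind Q0 \<kappa>) E = 0" using sets by auto
    have [measurable]: "(\<lambda>x. emeasure (\<kappa> x) E) \<in> borel_measurable Q0"
      using measurable_compose[OF \<kappa> measurable_emeasure_subprob_algebra[OF E]] .
    have "(\<integral>\<^sup>+x. emeasure (\<kappa> x) E \<partial>Q0) = 0" using E0 emeasure_bind[OF not_empty \<kappa> E] by simp
    then have "AE x in Q0. emeasure (\<kappa> x) E = 0"
      by (subst (asm) nn_integral_0_iff_AE) auto
    then have "(\<integral>\<^sup>+x. r x * emeasure (\<kappa> x) E \<partial>Q0) = 0"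
      by (subst nn_integral_0_iff_AE) auto
    moreover have "emeasure (bind (density Q0 r) \<kappa>) E = (\<integral>\<^sup>+x. r x * emeasure (\<kappa> x) E \<partial>Q0)"
      unfolding emeasure_bind[OF nonempty \<kappa>' E] by (rule nn_integral_density) measurable
    ultimately have "emeasure (bind (density Q0 r) \<kappa>) E = 0" by simp
    with E sets show "E \<in> null_sets (bind (density Q0 r) \<kappa>)" by auto
  qed
qed

lemma density_RN_deriv_enn2real:
  assumes "prob_space P" "prob_space Q" "sets P = sets Q" "absolutely_continuous Q P"
  shows "density Q (\<lambda>x. ennreal (enn2real (RN_deriv Q P x))) = P"
proof -
  interpret P: prob_space P by fact
  interpret Q: prob_space Q by fact
  have "AE x in Q. RN_deriv Q P x \<noteq> \<infinity>"
    using assms by (intro Q.RN_deriv_finite P.sigma_finite_measure_axioms) auto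
  then have "density Q (\<lambda>x. ennreal (enn2real (RN_deriv Q P x))) = density Q (RN_deriv Q P)"
    by (intro density_cong) (auto simp: less_top)
  also have "\<dots> = P" using assms by (intro Q.density_RN_deriv) auto
  finally show ?thesis .
qed

lemma renyi_divergence_le_ln:
  assumes \<alpha>: "\<alpha> > 1" and P: "prob_space P" and Q: "prob_space Q"
    and PQ: "sets P = sets Q" "absolutely_continuous Q P"
    and le: "renyi_integral \<alpha> P Q \<le> ennreal c"
  shows "renyi_divergence \<alpha> P Q \<le> ereal (ln c / (\<alpha> - 1))"
proof -
  interpret P: prob_space P by fact
  define u where "u x = enn2real (RN_deriv Q P x)" for x
  have u_meas[measurable]: "u \<in> borel_measurable Q" unfolding u_def by measurable
  have "renyi_integral \<alpha> P Q \<noteq> 0"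
  proof
    assume "renyi_integral \<alpha> P Q = 0"
    then have "AE x in Q. ennreal (u x powr \<alpha>) = 0"
      unfolding renyi_integral_def u_def[symmetric] by (subst (asm) nn_integral_0_iff_AE) simp_all
    then have "AE x in Q. ennreal (u x) = 0" by eventually_elim (simp add: u_def)
    then have "(\<integral>\<^sup>+x. ennreal (u x) \<partial>Q) = 0" by (subst nn_integral_0_iff_AE) simp_all
    moreover have "(\<integral>\<^sup>+x. ennreal (u x) \<partial>Q) = 1"
    proof -
      have "(\<integral>\<^sup>+x. ennreal (u x) \<partial>Q) = (\<integral>\<^sup>+x. 1 \<partial>density Q (\<lambda>x. ennreal (u x)))"
        by (subst nn_integral_density) simp_all
      also have "\<dots> = (\<integral>\<^sup>+x. 1 \<partial>P)"
        using density_RN_deriv_enn2real[OF P Q PQ] by (simp only: u_def)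
      also have "\<dots> = 1" by (simp add: P.emeasure_space_1)
      finally show ?thesis .
    qed
    ultimately show False by simp
  qed
  moreover have fin: "renyi_integral \<alpha> P Q \<noteq> \<infinity>" using le by (auto simp: top_unique)
  ultimately have pos: "0 < enn2real (renyi_integral \<alpha> P Q)"
    by (simp add: enn2real_positive_iff less_top[symmetric] zero_less_iff_neq_zero)
  have "c > 0" using le pos by (cases "c > 0") (auto simp: ennreal_neg)
  then have "enn2real (renyi_integral \<alpha> P Q) \<le> c" using le by (simp add: enn2real_leI)
  with pos have "ln (enn2real (renyi_integral \<alpha> P Q)) / (\<alpha> - 1) \<le> ln c / (\<alpha> - 1)"
    using \<alpha> by (intro divide_right_mono) auto
  then show ?thesis using PQ fin by (simp add: renyi_divergence_def)
qed

text \<open>Young's inequality bounds each truncated alpha-moment of dP/dQ by a convex combination of itself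
  and the alpha-moment of r; the truncation keeps it finite, so it can be absorbed.\<close>

theorem renyi_divergence_bind_density_le:
  fixes \<kappa> :: "'a \<Rightarrow> 'b measure"
  assumes \<alpha>: "\<alpha> > 1" and Q0: "prob_space Q0" and P0: "prob_space (density Q0 (\<lambda>x. ennreal (r x)))"
    and r[measurable]: "r \<in> borel_measurable Q0" and r_nn: "\<And>x. x \<in> space Q0 \<Longrightarrow> r x \<ge> 0"
    and \<kappa>: "\<kappa> \<in> Q0 \<rightarrow>\<^sub>M prob_algebra \<Omega>"
    and moment: "(\<integral>\<^sup>+x. ennreal (r x powr \<alpha>) \<partial>Q0) \<le> ennreal c"
  shows "renyi_divergence \<alpha> (bind (density Q0 (\<lambda>x. ennreal (r x))) \<kappa>) (bind Q0 \<kappa>)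
    \<le> ereal (ln c / (\<alpha> - 1))"
proof -
  define P where "P = bind (density Q0 (\<lambda>x. ennreal (r x))) \<kappa>"
  define Q where "Q = bind Q0 \<kappa>"
  have \<kappa>': "\<kappa> \<in> density Q0 (\<lambda>x. ennreal (r x)) \<rightarrow>\<^sub>M prob_algebra \<Omega>"
    using \<kappa> by (simp add: measurable_cong_sets[OF sets_density refl])
  have P: "prob_space P" unfolding P_def
    using P0 \<kappa>' by (intro prob_space_bind') (simp_all add: space_prob_algebra)
  have Q: "prob_space Q" unfolding Q_def
    using Q0 \<kappa> by (intro prob_space_bind') (simp_all add: space_prob_algebra)
  have \<kappa>_sub: "\<kappa> \<in> Q0 \<rightarrow>\<^sub>M subprob_algebra \<Omega>" using \<kappa> by (rule measurable_prob_algebraD)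
  have r_enn: "(\<lambda>x. ennreal (r x)) \<in> borel_measurable Q0" by measurable
  have PQ: "sets P = sets Q" "absolutely_continuous Q P"
    unfolding P_def Q_def
    by (rule sets_bind_density[OF Q0 r_enn \<kappa>_sub], rule absolutely_continuous_bind_density[OF Q0 r_enn \<kappa>_sub])
  have sets_Q: "sets Q = sets \<Omega>"
    unfolding Q_def using Q0 \<kappa> by (intro sets_bind') (simp_all add: space_prob_algebra)
  define u where "u x = enn2real (RN_deriv Q P x)" for x
  have u_nn: "u x \<ge> 0" for x by (simp add: u_def)
  have u_meas_Q[measurable]: "u \<in> borel_measurable Q" unfolding u_def by measurable
  then have u_meas[measurable]: "u \<in> borel_measurable \<Omega>"
    by (simp add: measurable_cong_sets[OF sets_Q refl])
  have P_eq: "P = density Q (\<lambda>x. ennreal (u x))"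
    using density_RN_deriv_enn2real[OF P Q PQ] by (simp add: u_def)
  have "renyi_integral \<alpha> P Q \<le> (\<integral>\<^sup>+x. ennreal (r x powr \<alpha>) \<partial>Q0)"
    unfolding renyi_integral_def u_def[symmetric]
  proof (rule nn_integral_powr_le_of_truncations[OF \<alpha>])
    fix k :: nat
    define m where "m x = min (u x) k" for x
    have "(\<integral>\<^sup>+x. ennreal (m x powr \<alpha>) \<partial>Q) \<le> (\<integral>\<^sup>+x. ennreal (u x) * ennreal (m x powr (\<alpha> - 1)) \<partial>Q)"
      using u_nn
      by (intro nn_integral_mono)
         (simp add: m_def ennreal_mult'[symmetric] ennreal_leI powr_le_mult_powr_minus_one)
    also have "\<dots> = (\<integral>\<^sup>+x. ennreal (m x powr (\<alpha> - 1)) \<partial>P)"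
      unfolding P_eq by (subst nn_integral_density) (simp_all add: m_def)
    also have "\<dots> \<le> ennreal (1 / \<alpha>) * (\<integral>\<^sup>+x. ennreal (r x powr \<alpha>) \<partial>Q0)
                   + ennreal ((\<alpha> - 1) / \<alpha>) * (\<integral>\<^sup>+x. ennreal (m x powr \<alpha>) \<partial>Q)"
      unfolding P_def Q_def
      by (rule nn_integral_powr_bind_density_le[OF \<alpha> r r_nn \<kappa>]) (simp_all add: m_def u_nn)
    finally show "(\<integral>\<^sup>+x. ennreal (min (u x) k powr \<alpha>) \<partial>Q)
      \<le> ennreal (1 / \<alpha>) * (\<integral>\<^sup>+x. ennreal (r x powr \<alpha>) \<partial>Q0)
        + ennreal ((\<alpha> - 1) / \<alpha>) * (\<integral>\<^sup>+x. ennreal (min (u x) k powr \<alpha>) \<partial>Q)"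
      unfolding m_def .
  qed (use moment prob_space.finite_measure[OF Q] in \<open>auto simp: u_nn top_unique\<close>)
  then have "renyi_integral \<alpha> P Q \<le> ennreal c" using moment by simp
  then show ?thesis unfolding P_def[symmetric] Q_def[symmetric] by (rule renyi_divergence_le_ln[OF \<alpha> P Q PQ])
qed

lemma indicator_PiE_eq_prod:
  assumes "finite J" "y \<in> extensional J"
  shows "indicator (Pi\<^sub>E J A) y = (\<Prod>c\<in>J. indicator (A c) (y c) :: ennreal)"
proof (cases "\<forall>c\<in>J. y c \<in> A c")
  case False
  then obtain c where c: "c \<in> J" "y c \<notin> A c" by auto
  then have "y \<notin> Pi\<^sub>E J A" by (auto simp: PiE_iff)
  moreover have "(\<Prod>c\<in>J. indicator (A c) (y c) :: ennreal) = 0"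
    using c assms(1) by (intro prod_zero) (auto intro!: bexI[of _ c])
  ultimately show ?thesis by simp
qed (use assms in \<open>simp add: PiE_iff\<close>)

lemma PiM_density:
  fixes M :: "'i \<Rightarrow> 'a measure" and f :: "'i \<Rightarrow> 'a \<Rightarrow> ennreal"
  assumes J: "finite J" and M: "product_sigma_finite M"
    and dens: "\<And>c. prob_space (density (M c) (f c))"
    and f[measurable]: "\<And>c. f c \<in> borel_measurable (M c)"
  shows "PiM J (\<lambda>c. density (M c) (f c)) = density (PiM J M) (\<lambda>y. \<Prod>c\<in>J. f c (y c))"
proof -
  interpret M: product_sigma_finite M by fact
  interpret D: product_prob_space "\<lambda>c. density (M c) (f c)" by (rule product_prob_spaceI) (rule dens)
  have sets: "sets (PiM J (\<lambda>c. density (M c) (f c))) = sets (PiM J M)"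
    by (intro sets_PiM_cong) simp_all
  show ?thesis
  proof (rule D.PiM_eqI[OF J, symmetric])
    show "sets (density (PiM J M) (\<lambda>y. \<Prod>c\<in>J. f c (y c))) = sets (PiM J (\<lambda>c. density (M c) (f c)))"
      using sets by simp
  next
    fix A assume A: "\<And>c. c \<in> J \<Longrightarrow> A c \<in> sets (density (M c) (f c))"
    then have [measurable]: "\<And>c. c \<in> J \<Longrightarrow> A c \<in> sets (M c)" by simp
    have "emeasure (density (PiM J M) (\<lambda>y. \<Prod>c\<in>J. f c (y c))) (Pi\<^sub>E J A)
        = (\<integral>\<^sup>+y. (\<Prod>c\<in>J. f c (y c)) * indicator (Pi\<^sub>E J A) y \<partial>PiM J M)"
      using J by (subst emeasure_density) (auto intro!: sets_PiM_I_finite)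
    also have "\<dots> = (\<integral>\<^sup>+y. (\<Prod>c\<in>J. f c (y c) * indicator (A c) (y c)) \<partial>PiM J M)"
    proof (intro nn_integral_cong)
      fix y assume "y \<in> space (PiM J M)"
      then have "y \<in> extensional J" by (simp add: space_PiM PiE_def)
      then show "(\<Prod>c\<in>J. f c (y c)) * indicator (Pi\<^sub>E J A) y = (\<Prod>c\<in>J. f c (y c) * indicator (A c) (y c))"
        by (subst indicator_PiE_eq_prod[OF J]) (simp_all add: prod.distrib)
    qed
    also have "\<dots> = (\<Prod>c\<in>J. \<integral>\<^sup>+t. f c t * indicator (A c) t \<partial>M c)"
      by (rule M.product_nn_integral_prod[OF J]) measurable
    also have "\<dots> = (\<Prod>c\<in>J. emeasure (density (M c) (f c)) (A c))"
      by (intro prod.cong refl) (simp add: emeasure_density)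
    finally show "emeasure (density (PiM J M) (\<lambda>y. \<Prod>c\<in>J. f c (y c))) (Pi\<^sub>E J A)
        = (\<Prod>c\<in>J. emeasure (density (M c) (f c)) (A c))" .
  qed
qed

lemma distr_PiM_add:
  fixes M :: "'i \<Rightarrow> real measure" and a :: "'i \<Rightarrow> real"
  assumes J: "finite J" and M: "\<And>c. prob_space (M c)" and sets_M: "\<And>c. sets (M c) = sets borel"
  shows "distr (PiM J M) (PiM J M) (\<lambda>y. restrict (\<lambda>c. y c + a c) J)
       = PiM J (\<lambda>c. distr (M c) borel (\<lambda>t. t + a c))"
proof -
  have add[measurable]: "(\<lambda>t. t + a c) \<in> M c \<rightarrow>\<^sub>M borel" for c
    by (simp add: measurable_cong_sets[OF sets_M refl])
  interpret M: product_prob_space M by (rule product_prob_spaceI) (rule M)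
  interpret D: product_prob_space "\<lambda>c. distr (M c) borel (\<lambda>t. t + a c)"
    by (rule product_prob_spaceI) (rule prob_space.prob_space_distr[OF M add])
  have sets: "sets (PiM J (\<lambda>c. distr (M c) borel (\<lambda>t. t + a c))) = sets (PiM J M)"
    by (intro sets_PiM_cong) (simp_all add: sets_M)
  show ?thesis
  proof (rule D.PiM_eqI[OF J])
    show "sets (distr (PiM J M) (PiM J M) (\<lambda>y. restrict (\<lambda>c. y c + a c) J))
        = sets (PiM J (\<lambda>c. distr (M c) borel (\<lambda>t. t + a c)))"
      using sets by simp
  next
    fix A assume "\<And>c. c \<in> J \<Longrightarrow> A c \<in> sets (distr (M c) borel (\<lambda>t. t + a c))"
    then have A[measurable]: "\<And>c. c \<in> J \<Longrightarrow> A c \<in> sets borel" by simp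
    have pre: "(\<lambda>y. restrict (\<lambda>c. y c + a c) J) -` Pi\<^sub>E J A \<inter> space (PiM J M)
        = Pi\<^sub>E J (\<lambda>c. (\<lambda>t. t + a c) -` A c \<inter> space (M c))"
      by (auto simp: space_PiM PiE_iff)
    have shift[measurable]: "(\<lambda>y. restrict (\<lambda>c. y c + a c) J) \<in> PiM J M \<rightarrow>\<^sub>M PiM J M"
      by (intro measurable_restrict)
        (simp add: measurable_cong_sets[OF refl sets_M] measurable_cong_sets[OF sets_M refl])
    have "emeasure (distr (PiM J M) (PiM J M) (\<lambda>y. restrict (\<lambda>c. y c + a c) J)) (Pi\<^sub>E J A)
        = emeasure (PiM J M) (Pi\<^sub>E J (\<lambda>c. (\<lambda>t. t + a c) -` A c \<inter> space (M c)))"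
      using J A by (subst emeasure_distr) (auto intro!: sets_PiM_I_finite simp: pre sets_M)
    also have "\<dots> = (\<Prod>c\<in>J. emeasure (M c) ((\<lambda>t. t + a c) -` A c \<inter> space (M c)))"
      using J by (intro M.emeasure_PiM) (auto intro: measurable_sets[OF add])
    also have "\<dots> = (\<Prod>c\<in>J. emeasure (distr (M c) borel (\<lambda>t. t + a c)) (A c))"
      by (intro prod.cong refl) (simp add: emeasure_distr)
    finally show "emeasure (distr (PiM J M) (PiM J M) (\<lambda>y. restrict (\<lambda>c. y c + a c) J)) (Pi\<^sub>E J A)
        = (\<Prod>c\<in>J. emeasure (distr (M c) borel (\<lambda>t. t + a c)) (A c))" .
  qed
qed

lemma distr_pair_shear_density:
  fixes \<mu> :: "'a measure" and \<Lambda> :: "'b measure"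
  assumes \<Lambda>: "sigma_finite_measure \<Lambda>"
    and S[measurable]: "(\<lambda>(x, y). S x y) \<in> \<mu> \<Otimes>\<^sub>M \<Lambda> \<rightarrow>\<^sub>M \<Lambda>"
    and q[measurable]: "(\<lambda>(x, y). q x y) \<in> borel_measurable (\<mu> \<Otimes>\<^sub>M \<Lambda>)"
    and S_density: "\<And>x. x \<in> space \<mu> \<Longrightarrow> distr \<Lambda> \<Lambda> (S x) = density \<Lambda> (q x)"
  shows "distr (\<mu> \<Otimes>\<^sub>M \<Lambda>) (\<mu> \<Otimes>\<^sub>M \<Lambda>) (\<lambda>(x, y). (x, S x y)) = density (\<mu> \<Otimes>\<^sub>M \<Lambda>) (\<lambda>(x, y). q x y)"
proof (rule measure_eqI)
  interpret \<Lambda>: sigma_finite_measure \<Lambda> by fact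
  fix E assume "E \<in> sets (distr (\<mu> \<Otimes>\<^sub>M \<Lambda>) (\<mu> \<Otimes>\<^sub>M \<Lambda>) (\<lambda>(x, y). (x, S x y)))"
  then have E[measurable]: "E \<in> sets (\<mu> \<Otimes>\<^sub>M \<Lambda>)" by simp
  have Sx: "S x \<in> \<Lambda> \<rightarrow>\<^sub>M \<Lambda>" and qx: "q x \<in> borel_measurable \<Lambda>" if "x \<in> space \<mu>" for x
    using measurable_Pair2[OF S that] measurable_Pair2[OF q that] by simp_all
  have "emeasure (distr (\<mu> \<Otimes>\<^sub>M \<Lambda>) (\<mu> \<Otimes>\<^sub>M \<Lambda>) (\<lambda>(x, y). (x, S x y))) E
      = (\<integral>\<^sup>+x. \<integral>\<^sup>+y. indicator E (x, S x y) \<partial>\<Lambda> \<partial>\<mu>)"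
  proof -
    have "emeasure (distr (\<mu> \<Otimes>\<^sub>M \<Lambda>) (\<mu> \<Otimes>\<^sub>M \<Lambda>) (\<lambda>(x, y). (x, S x y))) E
        = (\<integral>\<^sup>+z. indicator E z \<partial>distr (\<mu> \<Otimes>\<^sub>M \<Lambda>) (\<mu> \<Otimes>\<^sub>M \<Lambda>) (\<lambda>(x, y). (x, S x y)))"
      by (rule nn_integral_indicator[symmetric]) simp
    also have "\<dots> = (\<integral>\<^sup>+z. indicator E (case z of (x, y) \<Rightarrow> (x, S x y)) \<partial>(\<mu> \<Otimes>\<^sub>M \<Lambda>))"
      by (rule nn_integral_distr) simp_all
    also have "\<dots> = (\<integral>\<^sup>+x. \<integral>\<^sup>+y. indicator E (x, S x y) \<partial>\<Lambda> \<partial>\<mu>)"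
      by (subst \<Lambda>.nn_integral_fst[symmetric]) (simp_all add: split_beta')
    finally show ?thesis .
  qed
  also have "\<dots> = (\<integral>\<^sup>+x. \<integral>\<^sup>+y. indicator E (x, y) \<partial>distr \<Lambda> \<Lambda> (S x) \<partial>\<mu>)"
    using Sx by (intro nn_integral_cong) (simp add: nn_integral_distr)
  also have "\<dots> = (\<integral>\<^sup>+x. \<integral>\<^sup>+y. q x y * indicator E (x, y) \<partial>\<Lambda> \<partial>\<mu>)"
    using qx by (intro nn_integral_cong) (simp add: S_density nn_integral_density)
  also have "\<dots> = emeasure (density (\<mu> \<Otimes>\<^sub>M \<Lambda>) (\<lambda>(x, y). q x y)) E"
    by (subst emeasure_density) (simp_all add: \<Lambda>.nn_integral_fst[symmetric] split_beta')
  finally show "emeasure (distr (\<mu> \<Otimes>\<^sub>M \<Lambda>) (\<mu> \<Otimes>\<^sub>M \<Lambda>) (\<lambda>(x, y). (x, S x y))) E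
      = emeasure (density (\<mu> \<Otimes>\<^sub>M \<Lambda>) (\<lambda>(x, y). q x y)) E" .
qed simp

lemma distr_pair_adaptive_density:
  fixes \<mu> :: "'a measure" and \<Lambda> :: "'b measure"
  assumes \<Lambda>: "sigma_finite_measure \<Lambda>"
    and T[measurable]: "T \<in> \<mu> \<rightarrow>\<^sub>M \<mu>" and \<rho>[measurable]: "\<rho> \<in> borel_measurable \<mu>"
    and T_density: "distr \<mu> \<mu> T = density \<mu> \<rho>"
    and S[measurable]: "(\<lambda>(x, y). S x y) \<in> \<mu> \<Otimes>\<^sub>M \<Lambda> \<rightarrow>\<^sub>M \<Lambda>"
    and q[measurable]: "(\<lambda>(x, y). q x y) \<in> borel_measurable (\<mu> \<Otimes>\<^sub>M \<Lambda>)"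
    and S_density: "\<And>x. x \<in> space \<mu> \<Longrightarrow> distr \<Lambda> \<Lambda> (S x) = density \<Lambda> (q x)"
  shows "distr (\<mu> \<Otimes>\<^sub>M \<Lambda>) (\<mu> \<Otimes>\<^sub>M \<Lambda>) (\<lambda>(x, y). (T x, S (T x) y))
       = density (\<mu> \<Otimes>\<^sub>M \<Lambda>) (\<lambda>(x, y). \<rho> x * q x y)"
proof -
  interpret \<Lambda>: sigma_finite_measure \<Lambda> by fact
  define \<nu> where "\<nu> = density \<mu> \<rho>"
  have sets_\<nu>: "sets (\<nu> \<Otimes>\<^sub>M \<Lambda>) = sets (\<mu> \<Otimes>\<^sub>M \<Lambda>)"
    by (rule sets_pair_measure_cong) (simp_all add: \<nu>_def)
  note measurable_cong_sets[OF sets_\<nu> refl, measurable_cong]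
  have "distr (\<mu> \<Otimes>\<^sub>M \<Lambda>) (\<mu> \<Otimes>\<^sub>M \<Lambda>) (\<lambda>(x, y). (T x, y)) = distr \<mu> \<mu> T \<Otimes>\<^sub>M distr \<Lambda> \<Lambda> (\<lambda>y. y)"
    by (rule pair_measure_distr[symmetric]) (simp_all add: \<Lambda>.sigma_finite_measure_axioms)
  also have "\<dots> = \<nu> \<Otimes>\<^sub>M \<Lambda>" by (simp add: T_density \<nu>_def)
  finally have T_step: "distr (\<mu> \<Otimes>\<^sub>M \<Lambda>) (\<mu> \<Otimes>\<^sub>M \<Lambda>) (\<lambda>(x, y). (T x, y)) = \<nu> \<Otimes>\<^sub>M \<Lambda>" .
  have "\<nu> \<Otimes>\<^sub>M \<Lambda> = density \<mu> \<rho> \<Otimes>\<^sub>M density \<Lambda> (\<lambda>_. 1)" by (simp add: \<nu>_def density_1)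
  also have "\<dots> = density (\<mu> \<Otimes>\<^sub>M \<Lambda>) (\<lambda>(x, y). \<rho> x * 1)"
    by (rule pair_measure_density) (simp_all add: density_1 \<Lambda>.sigma_finite_measure_axioms)
  finally have \<nu>_density: "\<nu> \<Otimes>\<^sub>M \<Lambda> = density (\<mu> \<Otimes>\<^sub>M \<Lambda>) (\<lambda>(x, y). \<rho> x)" by simp
  have "distr (\<mu> \<Otimes>\<^sub>M \<Lambda>) (\<mu> \<Otimes>\<^sub>M \<Lambda>) (\<lambda>(x, y). (T x, S (T x) y))
      = distr (distr (\<mu> \<Otimes>\<^sub>M \<Lambda>) (\<mu> \<Otimes>\<^sub>M \<Lambda>) (\<lambda>(x, y). (T x, y))) (\<mu> \<Otimes>\<^sub>M \<Lambda>) (\<lambda>(x, y). (x, S x y))"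
    by (subst distr_distr) (simp_all add: comp_def split_beta')
  also have "\<dots> = distr (\<nu> \<Otimes>\<^sub>M \<Lambda>) (\<nu> \<Otimes>\<^sub>M \<Lambda>) (\<lambda>(x, y). (x, S x y))"
    unfolding T_step by (rule distr_cong) (simp_all add: sets_\<nu>)
  also have "\<dots> = density (\<nu> \<Otimes>\<^sub>M \<Lambda>) (\<lambda>(x, y). q x y)"
    by (rule distr_pair_shear_density[OF \<Lambda>]) (simp_all add: \<nu>_def S_density)
  also have "\<dots> = density (\<mu> \<Otimes>\<^sub>M \<Lambda>) (\<lambda>(x, y). \<rho> x * q x y)"
    unfolding \<nu>_density by (subst density_density_eq) (simp_all add: split_beta')
  finally show ?thesis .
qed

lemma nn_integral_pair_mult_powr_le:
  fixes \<mu> :: "'a measure" and \<Lambda> :: "'b measure"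
  assumes \<Lambda>: "sigma_finite_measure \<Lambda>"
    and \<rho>[measurable]: "\<rho> \<in> borel_measurable \<mu>" and \<rho>_nn: "\<And>x. \<rho> x \<ge> 0"
    and q[measurable]: "(\<lambda>(x, y). q x y) \<in> borel_measurable (\<mu> \<Otimes>\<^sub>M \<Lambda>)" and q_nn: "\<And>x y. q x y \<ge> 0"
    and q_moment: "\<And>x. x \<in> space \<mu> \<Longrightarrow> (\<integral>\<^sup>+y. ennreal (q x y powr \<alpha>) \<partial>\<Lambda>) \<le> ennreal c"
  shows "(\<integral>\<^sup>+z. ennreal ((\<rho> (fst z) * q (fst z) (snd z)) powr \<alpha>) \<partial>(\<mu> \<Otimes>\<^sub>M \<Lambda>))
       \<le> (\<integral>\<^sup>+x. ennreal (\<rho> x powr \<alpha>) \<partial>\<mu>) * ennreal c"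
proof -
  interpret \<Lambda>: sigma_finite_measure \<Lambda> by fact
  have qx[measurable]: "q x \<in> borel_measurable \<Lambda>" if "x \<in> space \<mu>" for x
    using measurable_Pair2[OF q that] by simp
  have "(\<integral>\<^sup>+z. ennreal ((\<rho> (fst z) * q (fst z) (snd z)) powr \<alpha>) \<partial>(\<mu> \<Otimes>\<^sub>M \<Lambda>))
      = (\<integral>\<^sup>+x. ennreal (\<rho> x powr \<alpha>) * (\<integral>\<^sup>+y. ennreal (q x y powr \<alpha>) \<partial>\<Lambda>) \<partial>\<mu>)"
    using \<rho>_nn q_nn
    by (subst \<Lambda>.nn_integral_fst[symmetric])
       (auto simp: split_beta' powr_mult ennreal_mult nn_integral_cmult[symmetric] intro!: nn_integral_cong)
  also have "\<dots> \<le> (\<integral>\<^sup>+x. ennreal (\<rho> x powr \<alpha>) * ennreal c \<partial>\<mu>)"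
    by (intro nn_integral_mono mult_left_mono q_moment) simp_all
  also have "\<dots> = (\<integral>\<^sup>+x. ennreal (\<rho> x powr \<alpha>) \<partial>\<mu>) * ennreal c"
    by (rule nn_integral_multc) simp
  finally show ?thesis .
qed

lemma (in pair_prob_space) bind_pair_measure:
  assumes K[measurable]: "K \<in> M1 \<Otimes>\<^sub>M M2 \<rightarrow>\<^sub>M subprob_algebra R"
  shows "bind (M1 \<Otimes>\<^sub>M M2) K = bind M1 (\<lambda>x. bind M2 (\<lambda>y. K (x, y)))"
proof -
  note measurable_bind[where N=M2, measurable]
  have [simp]: "M2 \<in> space (subprob_algebra M2)" by (simp add: space_subprob_algebra) unfold_locales
  have "bind (M1 \<Otimes>\<^sub>M M2) K = bind (bind M1 (\<lambda>x. bind M2 (\<lambda>y. return (M1 \<Otimes>\<^sub>M M2) (x, y)))) K"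
    by (simp only: pair_measure_eq_bind[symmetric])
  also have "\<dots> = bind M1 (\<lambda>x. bind M2 (\<lambda>y. K (x, y)))"
    by (auto intro!: bind_cong simp: bind_return[where N=R] space_pair_measure
             bind_assoc[where N="M1 \<Otimes>\<^sub>M M2" and R=R])
  finally show ?thesis .
qed

section \<open>Shifted Gaussians\<close>

definition normal_measure :: "real \<Rightarrow> real measure" where
  "normal_measure s = density lborel (normal_density 0 s)"

definition normal_ratio :: "real \<Rightarrow> real \<Rightarrow> real \<Rightarrow> real" where
  "normal_ratio s b y = normal_density b s y / normal_density 0 s y"

lemma sets_normal_measure[simp, measurable_cong]: "sets (normal_measure s) = sets borel"
  by (simp add: normal_measure_def)

lemma prob_space_normal_measure: "s > 0 \<Longrightarrow> prob_space (normal_measure s)"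
  unfolding normal_measure_def by (rule prob_space_normal_density)

lemma borel_measurable_normal_ratio[measurable (raw)]:
  assumes [measurable]: "g \<in> borel_measurable M" "h \<in> borel_measurable M"
  shows "(\<lambda>x. normal_ratio s (g x) (h x)) \<in> borel_measurable M"
  unfolding normal_ratio_def normal_density_def by measurable

lemma normal_ratio_pos: "s > 0 \<Longrightarrow> normal_ratio s b y > 0"
  unfolding normal_ratio_def by (simp add: normal_density_pos)

lemma distr_normal_measure_add:
  assumes s: "s > 0"
  shows "distr (normal_measure s) borel (\<lambda>y. y + b)
       = density (normal_measure s) (\<lambda>y. ennreal (normal_ratio s b y))"
proof -
  have "distr (normal_measure s) borel (\<lambda>y. y + b) = density lborel (normal_density b s)"
  proof (rule measure_eqI)
    fix A assume "A \<in> sets (distr (normal_measure s) borel (\<lambda>y. y + b))"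
    then have [measurable]: "A \<in> sets borel" by simp
    have "emeasure (distr (normal_measure s) borel (\<lambda>y. y + b)) A
        = (\<integral>\<^sup>+y. ennreal (normal_density 0 s y) * indicator A (y + b) \<partial>lborel)"
      unfolding normal_measure_def using measurable_sets[of "\<lambda>y::real. y + b" borel borel A]
      by (subst emeasure_distr) (auto simp: emeasure_density intro!: nn_integral_cong split: split_indicator)
    also have "\<dots> = (\<integral>\<^sup>+y. ennreal (normal_density b s (b + 1 * y)) * indicator A (b + 1 * y) \<partial>lborel)"
      by (simp add: normal_density_def add.commute)
    also have "\<dots> = (\<integral>\<^sup>+y. ennreal (normal_density b s y) * indicator A y \<partial>lborel)"
      by (subst nn_integral_real_affine[where c=1 and t=b]) simp_all
    also have "\<dots> = emeasure (density lborel (normal_density b s)) A"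
      by (simp add: emeasure_density)
    finally show "emeasure (distr (normal_measure s) borel (\<lambda>y. y + b)) A
        = emeasure (density lborel (normal_density b s)) A" .
  qed simp
  also have "\<dots> = density (normal_measure s) (\<lambda>y. ennreal (normal_ratio s b y))"
  proof -
    have "normal_density 0 s y \<noteq> 0" for y using normal_density_pos[OF s, of 0 y] by simp
    then show ?thesis
      unfolding normal_measure_def
      by (subst density_density_eq) (auto intro!: density_cong simp: normal_ratio_def ennreal_mult'[symmetric])
  qed
  finally show ?thesis .
qed

lemma normal_density_mult_normal_ratio_powr:
  assumes "s > 0"
  shows "normal_density 0 s y * normal_ratio s b y powr \<alpha>
       = exp (\<alpha> * (\<alpha> - 1) * b\<^sup>2 / (2 * s\<^sup>2)) * normal_density (\<alpha> * b) s y"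
proof -
  have "normal_ratio s b y = exp (-(y - b)\<^sup>2 / (2 * s\<^sup>2) - (-(y - 0)\<^sup>2 / (2 * s\<^sup>2)))"
    unfolding normal_ratio_def normal_density_def exp_diff using assms by simp
  also have "-(y - b)\<^sup>2 / (2 * s\<^sup>2) - (-(y - 0)\<^sup>2 / (2 * s\<^sup>2)) = (2 * b * y - b\<^sup>2) / (2 * s\<^sup>2)"
    using assms by (simp add: field_simps power2_eq_square)
  finally have "normal_ratio s b y powr \<alpha> = exp (\<alpha> * ((2 * b * y - b\<^sup>2) / (2 * s\<^sup>2)))"
    by (simp add: powr_def)
  moreover have "-(y - 0)\<^sup>2 / (2 * s\<^sup>2) + \<alpha> * ((2 * b * y - b\<^sup>2) / (2 * s\<^sup>2))
      = \<alpha> * (\<alpha> - 1) * b\<^sup>2 / (2 * s\<^sup>2) + -(y - \<alpha> * b)\<^sup>2 / (2 * s\<^sup>2)"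
    using assms by (simp add: field_simps power2_eq_square)
  ultimately show ?thesis
    unfolding normal_density_def by (simp add: exp_add[symmetric])
qed

lemma nn_integral_normal_ratio_powr:
  assumes s: "s > 0"
  shows "(\<integral>\<^sup>+y. ennreal (normal_ratio s b y powr \<alpha>) \<partial>normal_measure s)
       = ennreal (exp (\<alpha> * (\<alpha> - 1) * b\<^sup>2 / (2 * s\<^sup>2)))"
proof -
  interpret prob_space "density lborel (normal_density (\<alpha> * b) s)"
    using s by (rule prob_space_normal_density)
  have "(\<integral>\<^sup>+y. ennreal (normal_ratio s b y powr \<alpha>) \<partial>normal_measure s)
      = (\<integral>\<^sup>+y. ennreal (exp (\<alpha> * (\<alpha> - 1) * b\<^sup>2 / (2 * s\<^sup>2))) * ennreal (normal_density (\<alpha> * b) s y) \<partial>lborel)"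
    unfolding normal_measure_def
    by (subst nn_integral_density)
      (auto intro!: nn_integral_cong simp: ennreal_mult'[symmetric] normal_density_mult_normal_ratio_powr[OF s])
  also have "\<dots> = ennreal (exp (\<alpha> * (\<alpha> - 1) * b\<^sup>2 / (2 * s\<^sup>2)))"
    using emeasure_space_1 by (subst nn_integral_cmult) (simp_all add: emeasure_density)
  finally show ?thesis .
qed

lemma distr_PiM_normal_add:
  assumes J: "finite J" and s: "s > 0"
  shows "distr (PiM J (\<lambda>_. normal_measure s)) (PiM J (\<lambda>_. normal_measure s)) (\<lambda>y. restrict (\<lambda>c. y c + a c) J)
       = density (PiM J (\<lambda>_. normal_measure s)) (\<lambda>y. ennreal (\<Prod>c\<in>J. normal_ratio s (a c) (y c)))"
proof -
  interpret N: prob_space "normal_measure s" using s by (rule prob_space_normal_measure)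
  have "distr (PiM J (\<lambda>_. normal_measure s)) (PiM J (\<lambda>_. normal_measure s)) (\<lambda>y. restrict (\<lambda>c. y c + a c) J)
      = PiM J (\<lambda>c. density (normal_measure s) (\<lambda>y. ennreal (normal_ratio s (a c) y)))"
    using J N.prob_space_axioms by (simp add: distr_PiM_add distr_normal_measure_add[OF s])
  also have "\<dots> = density (PiM J (\<lambda>_. normal_measure s)) (\<lambda>y. \<Prod>c\<in>J. ennreal (normal_ratio s (a c) (y c)))"
  proof (rule PiM_density[OF J])
    show "product_sigma_finite (\<lambda>_. normal_measure s)"
      by (rule product_prob_space.axioms(1), rule product_prob_spaceI) (rule N.prob_space_axioms)
    show "prob_space (density (normal_measure s) (\<lambda>y. ennreal (normal_ratio s (a c) y)))" for c
      using N.prob_space_distr[of "\<lambda>y. y + a c" borel] by (simp add: distr_normal_measure_add[OF s])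
  qed simp
  finally show ?thesis using normal_ratio_pos[OF s] by (simp add: prod_ennreal less_imp_le)
qed

lemma nn_integral_PiM_normal_ratio_powr:
  assumes J: "finite J" and s: "s > 0"
  shows "(\<integral>\<^sup>+y. ennreal ((\<Prod>c\<in>J. normal_ratio s (a c) (y c)) powr \<alpha>) \<partial>PiM J (\<lambda>_. normal_measure s))
       = ennreal (exp (\<alpha> * (\<alpha> - 1) * (\<Sum>c\<in>J. (a c)\<^sup>2) / (2 * s\<^sup>2)))"
proof -
  interpret product_prob_space "\<lambda>_. normal_measure s"
    by (rule product_prob_spaceI) (rule prob_space_normal_measure[OF s])
  have "(\<integral>\<^sup>+y. ennreal ((\<Prod>c\<in>J. normal_ratio s (a c) (y c)) powr \<alpha>) \<partial>PiM J (\<lambda>_. normal_measure s))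
      = (\<integral>\<^sup>+y. (\<Prod>c\<in>J. ennreal (normal_ratio s (a c) (y c) powr \<alpha>)) \<partial>PiM J (\<lambda>_. normal_measure s))"
    by (intro nn_integral_cong) (simp add: prod_powr_distrib prod_ennreal)
  also have "\<dots> = (\<Prod>c\<in>J. ennreal (exp (\<alpha> * (\<alpha> - 1) * (a c)\<^sup>2 / (2 * s\<^sup>2))))"
    by (subst product_nn_integral_prod[OF J]) (simp_all add: nn_integral_normal_ratio_powr[OF s])
  also have "\<dots> = ennreal (exp (\<alpha> * (\<alpha> - 1) * (\<Sum>c\<in>J. (a c)\<^sup>2) / (2 * s\<^sup>2)))"
    using J by (simp add: prod_ennreal exp_sum sum_divide_distrib sum_distrib_left)
  finally show ?thesis .
qed

lemma row_normalize_cong: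
  "(\<And>j. j < d \<Longrightarrow> h j = h' j) \<Longrightarrow> row_normalize d h = row_normalize d h'"
  unfolding row_normalize_def by (intro ext) (auto intro!: sum.cong)

lemma sum_square_row_normalize_le: "(\<Sum>j<d. (row_normalize d h j)\<^sup>2) \<le> 1"
proof -
  define S where "S = (\<Sum>k<d. (h k)\<^sup>2)"
  have "S \<ge> 0" unfolding S_def by (intro sum_nonneg) auto
  then have "(\<Sum>j<d. (row_normalize d h j)\<^sup>2) = (\<Sum>j<d. (h j)\<^sup>2 / S)"
    unfolding row_normalize_def S_def[symmetric] by (intro sum.cong) (auto simp: power_divide)
  also have "\<dots> = S / S" unfolding S_def by (rule sum_divide_distrib[symmetric])
  also have "\<dots> \<le> 1" by (cases "S = 0") auto
  finally show ?thesis .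
qed

lemma sum_square_gap_H_le: "k < n \<Longrightarrow> (\<Sum>j<d. (gap_H n d f A X w N l k j)\<^sup>2) \<le> 1"
  by (cases l) (simp_all add: sum_square_row_normalize_le)

lemma gap_H_cong_noise:
  assumes "\<And>l' i j. l' < l \<Longrightarrow> i < n \<Longrightarrow> j < d \<Longrightarrow> N l' i j = N' l' i j"
  shows "gap_H n d f A X w N l = gap_H n d f A X w N' l"
  using assms
proof (induction l)
  case (Suc l)
  then have IH: "gap_H n d f A X w N l = gap_H n d f A X w N' l" by auto
  have "row_normalize d (\<lambda>j. (\<Sum>k<n. (if A i k then 1 else 0) * gap_H n d f A X w N' l k j) + N l i j)
      = row_normalize d (\<lambda>j. (\<Sum>k<n. (if A i k then 1 else 0) * gap_H n d f A X w N' l k j) + N' l i j)"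
    if "i < n" for i
    using that Suc.prems by (intro row_normalize_cong) simp
  then show ?case by (intro ext) (simp add: IH)
qed simp

lemma borel_measurable_gap_H:
  assumes "\<And>i j. (\<lambda>\<omega>. f (W \<omega>) (X i) j) \<in> borel_measurable M"
    and "\<And>l i j. (\<lambda>\<omega>. F \<omega> l i j) \<in> borel_measurable M"
  shows "(\<lambda>\<omega>. gap_H n d f A X (W \<omega>) (F \<omega>) l i j) \<in> borel_measurable M"
proof (induction l arbitrary: i j)
  case 0
  note assms(1)[measurable]
  show ?case by (cases "i < n") (simp_all add: row_normalize_def)
next
  case (Suc l)
  note Suc[measurable] assms(2)[measurable]
  show ?case by (cases "i < n") (simp_all add: row_normalize_def)
qed

lemma measurable_PiM_UNIV:
  "(\<And>i. (\<lambda>x. F x i) \<in> M \<rightarrow>\<^sub>M N i) \<Longrightarrow> F \<in> M \<rightarrow>\<^sub>M PiM UNIV N"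
  using measurable_restrict[of UNIV "\<lambda>i x. F x i" M N] by (simp add: restrict_UNIV)

lemma measurable_RowS: "(\<And>j. (\<lambda>x. F x j) \<in> borel_measurable M) \<Longrightarrow> F \<in> M \<rightarrow>\<^sub>M RowS"
  unfolding RowS_def by (rule measurable_PiM_UNIV)

lemma measurable_MatS: "(\<And>i j. (\<lambda>x. F x i j) \<in> borel_measurable M) \<Longrightarrow> F \<in> M \<rightarrow>\<^sub>M MatS"
  unfolding MatS_def by (intro measurable_PiM_UNIV measurable_RowS)

lemma measurable_NoiseS: "(\<And>l i j. (\<lambda>x. F x l i j) \<in> borel_measurable M) \<Longrightarrow> F \<in> M \<rightarrow>\<^sub>M NoiseS"
  unfolding NoiseS_def by (intro measurable_PiM_UNIV measurable_MatS)

lemma RowS_component: "(\<lambda>x. x j) \<in> borel_measurable RowS"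
  unfolding RowS_def by (rule measurable_component_singleton) simp

lemma MatS_component: "(\<lambda>x. x i j) \<in> borel_measurable MatS"
proof -
  have "(\<lambda>x. x i) \<in> MatS \<rightarrow>\<^sub>M RowS" unfolding MatS_def by (rule measurable_component_singleton) simp
  then show ?thesis by (rule measurable_compose[OF _ RowS_component])
qed

lemma NoiseS_component: "(\<lambda>x. x l i j) \<in> borel_measurable NoiseS"
proof -
  have "(\<lambda>x. x l) \<in> NoiseS \<rightarrow>\<^sub>M MatS" unfolding NoiseS_def by (rule measurable_component_singleton) simp
  then show ?thesis by (rule measurable_compose[OF _ MatS_component])
qed

lemma PiM_normal_component: "(\<lambda>x. x c) \<in> borel_measurable (PiM K (\<lambda>_. normal_measure s))"
proof (cases "c \<in> K")
  case True
  then show ?thesis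
    using measurable_component_singleton[of c K "\<lambda>_. normal_measure s"]
    by (simp add: measurable_cong_sets[OF refl sets_normal_measure])
next
  case False
  then have "x c = undefined" if "x \<in> space (PiM K (\<lambda>_. normal_measure s))" for x
    using that by (auto simp: space_PiM PiE_def extensional_def)
  then show ?thesis by (subst measurable_cong[where g="\<lambda>_. undefined"]) auto
qed

section \<open>Flipping one edge\<close>

text \<open>The finitely many Gaussian coordinates are indexed by triples (layer, row, column); NoiseS uses
  the curried form.\<close>

definition noise_of :: "(nat \<times> nat \<times> nat \<Rightarrow> real) \<Rightarrow> nat \<Rightarrow> nat \<Rightarrow> nat \<Rightarrow> real" where
  "noise_of x = (\<lambda>l i j. x (l, i, j))"

locale edge_flip =
  fixes n d :: nat and f :: "'w \<Rightarrow> (nat \<Rightarrow> real) \<Rightarrow> nat \<Rightarrow> real" and X :: "nat \<Rightarrow> nat \<Rightarrow> real"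
    and A A' :: "nat \<Rightarrow> nat \<Rightarrow> bool" and i0 k0 :: nat and s :: real
  assumes i0: "i0 < n" and k0: "k0 < n" and s: "s > 0"
    and agree: "\<And>i k. i < n \<Longrightarrow> k < n \<Longrightarrow> (i, k) \<noteq> (i0, k0) \<Longrightarrow> A i k = A' i k"
begin

definition edge_diff :: real where
  "edge_diff = (if A i0 k0 then 1 else 0) - (if A' i0 k0 then 1 else 0)"

lemma edge_diff_square_le: "edge_diff\<^sup>2 \<le> 1"
  unfolding edge_diff_def by auto

lemma aggregate_edge_flip:
  assumes i: "i < n"
  shows "(\<Sum>k<n. (if A i k then 1 else 0) * h k)
       = (\<Sum>k<n. (if A' i k then 1 else 0) * h k) + (if i = i0 then edge_diff * h k0 else 0)"
proof -
  have "(\<Sum>k<n. (if A i k then 1 else 0) * h k) - (\<Sum>k<n. (if A' i k then 1 else 0) * h k)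
      = (\<Sum>k<n. if k = k0 then (if i = i0 then edge_diff * h k0 else 0) else 0)"
    unfolding sum_subtractf[symmetric]
    using agree[of i] i by (intro sum.cong) (auto simp: edge_diff_def left_diff_distrib)
  also have "\<dots> = (if i = i0 then edge_diff * h k0 else 0)"
    using k0 by (simp add: sum.delta)
  finally show ?thesis by simp
qed

lemma gap_H_edge_flip:
  assumes N': "\<And>l i j. l < K \<Longrightarrow> i < n \<Longrightarrow> j < d \<Longrightarrow>
      N' l i j = N l i j + (if i = i0 then edge_diff * gap_H n d f A X w N l k0 j else 0)"
  shows "l \<le> K \<Longrightarrow> gap_H n d f A' X w N' l = gap_H n d f A X w N l"
proof (induction l)
  case (Suc l)
  then have IH: "gap_H n d f A' X w N' l = gap_H n d f A X w N l" by simp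
  have "row_normalize d (\<lambda>j. (\<Sum>k<n. (if A' i k then 1 else 0) * gap_H n d f A X w N l k j) + N' l i j)
      = row_normalize d (\<lambda>j. (\<Sum>k<n. (if A i k then 1 else 0) * gap_H n d f A X w N l k j) + N l i j)"
    if i: "i < n" for i
  proof (intro row_normalize_cong)
    fix j assume j: "j < d"
    show "(\<Sum>k<n. (if A' i k then 1 else 0) * gap_H n d f A X w N l k j) + N' l i j
        = (\<Sum>k<n. (if A i k then 1 else 0) * gap_H n d f A X w N l k j) + N l i j"
      using aggregate_edge_flip[OF i, of "\<lambda>k. gap_H n d f A X w N l k j"] N'[of l i j] Suc.prems i j
      by simp
  qed
  then show ?case by (intro ext) (simp add: IH)
qed simp

definition noise_coords :: "nat \<Rightarrow> (nat \<times> nat \<times> nat) set" where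
  "noise_coords k = {..<k} \<times> {..<n} \<times> {..<d}"

definition layer_coords :: "nat \<Rightarrow> (nat \<times> nat \<times> nat) set" where
  "layer_coords k = {k} \<times> {..<n} \<times> {..<d}"

definition noise_measure :: "nat \<Rightarrow> (nat \<times> nat \<times> nat \<Rightarrow> real) measure" where
  "noise_measure k = PiM (noise_coords k) (\<lambda>_. normal_measure s)"

definition layer_noise :: "nat \<Rightarrow> (nat \<times> nat \<times> nat \<Rightarrow> real) measure" where
  "layer_noise k = PiM (layer_coords k) (\<lambda>_. normal_measure s)"

text \<open>The shift of coordinate (l, i, j) only depends on the noise of the layers below l, so the
  shifted noise is an adaptive composition of Gaussian shifts with densities correction_ratio.\<close>

definition correction :: "(nat \<Rightarrow> nat \<Rightarrow> bool) \<Rightarrow> 'w \<Rightarrow> (nat \<times> nat \<times> nat \<Rightarrow> real) \<Rightarrow> nat \<times> nat \<times> nat \<Rightarrow> real" where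
  "correction B w x = (\<lambda>(l, i, j). if i = i0 then edge_diff * gap_H n d f B X w (noise_of x) l k0 j else 0)"

definition corrected_noise :: "'w \<Rightarrow> nat \<Rightarrow> (nat \<times> nat \<times> nat \<Rightarrow> real) \<Rightarrow> nat \<times> nat \<times> nat \<Rightarrow> real" where
  "corrected_noise w k x = restrict (\<lambda>c. x c + correction A w x c) (noise_coords k)"

definition correction_ratio :: "'w \<Rightarrow> nat \<Rightarrow> (nat \<times> nat \<times> nat \<Rightarrow> real) \<Rightarrow> real" where
  "correction_ratio w k x = (\<Prod>c\<in>noise_coords k. normal_ratio s (correction A' w x c) (x c))"

lemma finite_noise_coords[simp]: "finite (noise_coords k)" by (simp add: noise_coords_def)
lemma finite_layer_coords[simp]: "finite (layer_coords k)" by (simp add: layer_coords_def)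
lemma noise_coords_Suc: "noise_coords (Suc k) = noise_coords k \<union> layer_coords k"
  by (auto simp: noise_coords_def layer_coords_def)
lemma noise_coords_layer_coords_disjoint[simp]: "noise_coords k \<inter> layer_coords k = {}"
  by (auto simp: noise_coords_def layer_coords_def)

lemma prob_space_noise_measure: "prob_space (noise_measure k)"
  unfolding noise_measure_def by (rule prob_space_PiM) (rule prob_space_normal_measure[OF s])

lemma prob_space_layer_noise: "prob_space (layer_noise k)"
  unfolding layer_noise_def by (rule prob_space_PiM) (rule prob_space_normal_measure[OF s])

lemma correction_ratio_nonneg: "correction_ratio w k x \<ge> 0"
  unfolding correction_ratio_def using normal_ratio_pos[OF s] by (intro prod_nonneg) (auto intro: less_imp_le)

lemma correction_cong:
  assumes "\<And>c. c \<in> noise_coords l \<Longrightarrow> x c = x' c"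
  shows "correction B w x (l, i, j) = correction B w x' (l, i, j)"
proof -
  have "gap_H n d f B X w (noise_of x) l = gap_H n d f B X w (noise_of x') l"
    by (rule gap_H_cong_noise) (auto simp: noise_of_def noise_coords_def intro!: assms)
  then show ?thesis by (simp add: correction_def)
qed

lemma borel_measurable_correction:
  assumes "\<And>c. (\<lambda>\<omega>. F \<omega> c) \<in> borel_measurable M"
    and "\<And>i j. (\<lambda>\<omega>. f (W \<omega>) (X i) j) \<in> borel_measurable M"
  shows "(\<lambda>\<omega>. correction B (W \<omega>) (F \<omega>) c) \<in> borel_measurable M"
proof -
  obtain l i j where c: "c = (l, i, j)" by (cases c) auto
  have H: "(\<lambda>\<omega>. gap_H n d f B X (W \<omega>) (noise_of (F \<omega>)) l k0 j) \<in> borel_measurable M"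
    by (rule borel_measurable_gap_H[where f=f and W=W and X=X and F="\<lambda>\<omega>. noise_of (F \<omega>)"])
      (rule assms(2), unfold noise_of_def, rule assms(1))
  have "(\<lambda>\<omega>. correction B (W \<omega>) (F \<omega>) c)
      = (\<lambda>\<omega>. (if i = i0 then edge_diff else 0) * gap_H n d f B X (W \<omega>) (noise_of (F \<omega>)) l k0 j)"
    by (simp add: correction_def c)
  then show ?thesis using borel_measurable_times[OF borel_measurable_const H] by (simp only:)
qed

lemma correction_measurable:
  "(\<lambda>x. correction B w x c) \<in> borel_measurable (PiM K (\<lambda>_. normal_measure s))"
  by (rule borel_measurable_correction[where W="\<lambda>_. w" and F="\<lambda>x. x"]) (rule PiM_normal_component, rule measurable_const, simp)

lemma corrected_noise_measurable[measurable]: "corrected_noise w k \<in> noise_measure k \<rightarrow>\<^sub>M noise_measure k"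
  unfolding corrected_noise_def noise_measure_def
proof (rule measurable_restrict)
  fix c
  show "(\<lambda>x. x c + correction A w x c) \<in> PiM (noise_coords k) (\<lambda>_. normal_measure s) \<rightarrow>\<^sub>M normal_measure s"
    unfolding measurable_cong_sets[OF refl sets_normal_measure]
    by (rule borel_measurable_add[OF PiM_normal_component correction_measurable])
qed

lemma correction_ratio_measurable[measurable]: "correction_ratio w k \<in> borel_measurable (noise_measure k)"
  unfolding correction_ratio_def noise_measure_def
  by (rule borel_measurable_prod, rule borel_measurable_normal_ratio, rule correction_measurable,
      rule PiM_normal_component)

lemma sum_square_correction_le: "(\<Sum>c\<in>layer_coords k. (correction B w x c)\<^sup>2) \<le> 1"
proof -
  define h where "h j = gap_H n d f B X w (noise_of x) k k0 j" for j
  have "(\<Sum>c\<in>layer_coords k. (correction B w x c)\<^sup>2)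
      = (\<Sum>l\<in>{k}. \<Sum>p\<in>{..<n} \<times> {..<d}. (correction B w x (l, p))\<^sup>2)"
    unfolding layer_coords_def by (subst sum.cartesian_product) simp
  also have "\<dots> = (\<Sum>p\<in>{..<n} \<times> {..<d}. (correction B w x (k, p))\<^sup>2)" by simp
  also have "\<dots> = (\<Sum>i<n. \<Sum>j<d. (correction B w x (k, i, j))\<^sup>2)"
    by (subst sum.cartesian_product) simp
  also have "\<dots> = (\<Sum>i<n. if i = i0 then (\<Sum>j<d. (edge_diff * h j)\<^sup>2) else 0)"
    by (intro sum.cong refl) (auto simp: correction_def h_def)
  also have "\<dots> = (\<Sum>j<d. (edge_diff * h j)\<^sup>2)" using i0 by (simp add: sum.delta)
  also have "\<dots> = edge_diff\<^sup>2 * (\<Sum>j<d. (h j)\<^sup>2)" by (simp add: power_mult_distrib sum_distrib_left)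
  also have "\<dots> \<le> 1 * 1"
    using edge_diff_square_le sum_square_gap_H_le[OF k0] unfolding h_def
    by (intro mult_mono) (auto intro: sum_nonneg)
  finally show ?thesis by simp
qed


lemma correction_corrected_noise:
  "correction A w x (k, i, j) = correction A' w (corrected_noise w k x) (k, i, j)"
proof -
  have "gap_H n d f A' X w (noise_of (corrected_noise w k x)) k = gap_H n d f A X w (noise_of x) k"
    by (rule gap_H_edge_flip[where K=k])
       (auto simp: noise_of_def corrected_noise_def noise_coords_def correction_def)
  then show ?thesis by (simp add: correction_def)
qed

lemma corrected_noise_merge:
  "corrected_noise w (Suc k) (merge (noise_coords k) (layer_coords k) (x, y))
 = merge (noise_coords k) (layer_coords k)
     (corrected_noise w k x, restrict (\<lambda>c. y c + correction A' w (corrected_noise w k x) c) (layer_coords k))"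
proof (rule ext)
  fix c :: "nat \<times> nat \<times> nat"
  obtain l i j where c: "c = (l, i, j)" by (cases c) auto
  have early: "correction A w (merge (noise_coords k) (layer_coords k) (x, y)) (l, i, j) = correction A w x (l, i, j)"
    if "l \<le> k" by (rule correction_cong) (use that in \<open>auto simp: noise_coords_def merge_def\<close>)
  consider "c \<in> noise_coords k" | "c \<in> layer_coords k" | "c \<notin> noise_coords (Suc k)"
    using noise_coords_Suc by auto
  then show "corrected_noise w (Suc k) (merge (noise_coords k) (layer_coords k) (x, y)) c
    = merge (noise_coords k) (layer_coords k)
        (corrected_noise w k x, restrict (\<lambda>c. y c + correction A' w (corrected_noise w k x) c) (layer_coords k)) c"
  proof cases
    case 1
    then have "l < k" by (simp add: c noise_coords_def)
    then show ?thesis using 1 early by (simp add: corrected_noise_def noise_coords_Suc merge_def c)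
  next
    case 2
    then have "l = k" "c \<notin> noise_coords k" by (auto simp: c layer_coords_def noise_coords_def)
    then show ?thesis using 2 early correction_corrected_noise[of w x k i j]
      by (simp add: corrected_noise_def noise_coords_Suc merge_def c)
  qed (simp add: corrected_noise_def merge_def noise_coords_Suc)
qed

lemma correction_ratio_merge:
  "correction_ratio w (Suc k) (merge (noise_coords k) (layer_coords k) (x, y))
 = correction_ratio w k x * (\<Prod>c\<in>layer_coords k. normal_ratio s (correction A' w x c) (y c))"
proof -
  define z where "z = merge (noise_coords k) (layer_coords k) (x, y)"
  have corr: "correction A' w z c = correction A' w x c" if "c \<in> noise_coords (Suc k)" for c
  proof -
    obtain l i j where c: "c = (l, i, j)" by (cases c) auto
    have "l \<le> k" using that by (simp add: c noise_coords_def)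
    then show ?thesis unfolding c z_def
      by (intro correction_cong) (auto simp: noise_coords_def merge_def)
  qed
  have "correction_ratio w (Suc k) z
      = (\<Prod>c\<in>noise_coords k. normal_ratio s (correction A' w z c) (z c))
        * (\<Prod>c\<in>layer_coords k. normal_ratio s (correction A' w z c) (z c))"
    unfolding correction_ratio_def noise_coords_Suc by (rule prod.union_disjoint) auto
  also have "\<dots> = correction_ratio w k x * (\<Prod>c\<in>layer_coords k. normal_ratio s (correction A' w x c) (y c))"
  proof -
    have "z c = x c" if "c \<in> noise_coords k" for c using that by (simp add: z_def merge_def)
    moreover have layer: "c \<notin> noise_coords k" if "c \<in> layer_coords k" for c
      using that by (auto simp: noise_coords_def layer_coords_def)
    moreover have "z c = y c" if "c \<in> layer_coords k" for c
      using that layer by (auto simp: z_def merge_def)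
    ultimately show ?thesis
      unfolding correction_ratio_def
      by (intro arg_cong2[where f="(*)"] prod.cong) (auto simp: corr noise_coords_Suc)
  qed
  finally show ?thesis unfolding z_def .
qed

lemma noise_measure_Suc:
  "noise_measure (Suc k)
 = distr (noise_measure k \<Otimes>\<^sub>M layer_noise k) (noise_measure (Suc k)) (merge (noise_coords k) (layer_coords k))"
proof -
  interpret product_prob_space "\<lambda>_::nat \<times> nat \<times> nat. normal_measure s"
    by (rule product_prob_spaceI) (rule prob_space_normal_measure[OF s])
  show ?thesis
    unfolding noise_measure_def layer_noise_def noise_coords_Suc by (rule distr_merge[symmetric]) auto
qed

lemma measurable_layer_shift:
  "(\<lambda>(x, y). restrict (\<lambda>c. y c + correction A' w x c) (layer_coords k))
     \<in> noise_measure k \<Otimes>\<^sub>M layer_noise k \<rightarrow>\<^sub>M layer_noise k"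
  unfolding layer_noise_def split_beta'
proof (rule measurable_restrict)
  fix c
  have fst_comp: "(\<lambda>z. fst z c') \<in> borel_measurable (noise_measure k \<Otimes>\<^sub>M layer_noise k)" for c'
    unfolding noise_measure_def by (rule measurable_compose[OF measurable_fst PiM_normal_component])
  have "(\<lambda>z. correction A' w (fst z) c) \<in> borel_measurable (noise_measure k \<Otimes>\<^sub>M layer_noise k)"
    by (rule borel_measurable_correction[where W="\<lambda>_. w", OF fst_comp borel_measurable_const])
  moreover have "(\<lambda>z. snd z c) \<in> borel_measurable (noise_measure k \<Otimes>\<^sub>M layer_noise k)"
    unfolding layer_noise_def by (rule measurable_compose[OF measurable_snd PiM_normal_component])
  ultimately show "(\<lambda>z. snd z c + correction A' w (fst z) c)
      \<in> noise_measure k \<Otimes>\<^sub>M PiM (layer_coords k) (\<lambda>_. normal_measure s) \<rightarrow>\<^sub>M normal_measure s"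
    unfolding measurable_cong_sets[OF refl sets_normal_measure] layer_noise_def[symmetric]
    by (rule borel_measurable_add[rotated])
qed

lemma measurable_layer_ratio:
  "(\<lambda>(x, y). \<Prod>c\<in>layer_coords k. normal_ratio s (correction A' w x c) (y c))
     \<in> borel_measurable (noise_measure k \<Otimes>\<^sub>M layer_noise k)"
  unfolding split_beta'
proof (rule borel_measurable_prod, rule borel_measurable_normal_ratio)
  fix c
  have fst_comp: "(\<lambda>z. fst z c') \<in> borel_measurable (noise_measure k \<Otimes>\<^sub>M layer_noise k)" for c'
    unfolding noise_measure_def by (rule measurable_compose[OF measurable_fst PiM_normal_component])
  show "(\<lambda>z. correction A' w (fst z) c) \<in> borel_measurable (noise_measure k \<Otimes>\<^sub>M layer_noise k)"
    by (rule borel_measurable_correction[where W="\<lambda>_. w", OF fst_comp borel_measurable_const])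
  show "(\<lambda>z. snd z c) \<in> borel_measurable (noise_measure k \<Otimes>\<^sub>M layer_noise k)"
    unfolding layer_noise_def by (rule measurable_compose[OF measurable_snd PiM_normal_component])
qed

lemma distr_corrected_noise:
  "distr (noise_measure k) (noise_measure k) (corrected_noise w k)
 = density (noise_measure k) (\<lambda>x. ennreal (correction_ratio w k x))"
proof (induction k)
  case 0
  have "space (noise_measure 0) = {\<lambda>_. undefined}"
    by (simp add: noise_measure_def noise_coords_def space_PiM)
  then have "corrected_noise w 0 x = x" if "x \<in> space (noise_measure 0)" for x
    using that by (simp add: corrected_noise_def noise_coords_def restrict_def)
  then have "distr (noise_measure 0) (noise_measure 0) (corrected_noise w 0)
      = distr (noise_measure 0) (noise_measure 0) (\<lambda>x. x)"
    by (intro distr_cong) simp_all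
  then show ?case by (simp add: correction_ratio_def noise_coords_def density_1)
next
  case (Suc k)
  define \<mu> where "\<mu> = noise_measure k \<Otimes>\<^sub>M layer_noise k"
  define m :: "_ \<Rightarrow> _ \<Rightarrow> real" where "m = merge (noise_coords k) (layer_coords k)"
  define S where "S x y = restrict (\<lambda>c. y c + correction A' w x c) (layer_coords k)" for x y
  define q where "q x y = (\<Prod>c\<in>layer_coords k. normal_ratio s (correction A' w x c) (y c))" for x y
  interpret layer: prob_space "layer_noise k" by (rule prob_space_layer_noise)
  have m[measurable]: "m \<in> \<mu> \<rightarrow>\<^sub>M noise_measure (Suc k)"
    unfolding m_def \<mu>_def noise_measure_def layer_noise_def noise_coords_Suc by (rule measurable_merge)
  have q_nn: "q x y \<ge> 0" for x y
    unfolding q_def using normal_ratio_pos[OF s] by (intro prod_nonneg) (auto intro: less_imp_le)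
  have adaptive: "distr \<mu> \<mu> (\<lambda>(x, y). (corrected_noise w k x, S (corrected_noise w k x) y))
      = density \<mu> (\<lambda>(x, y). ennreal (correction_ratio w k x) * ennreal (q x y))"
    unfolding \<mu>_def
  proof (rule distr_pair_adaptive_density[OF layer.sigma_finite_measure_axioms _ _ Suc.IH])
    show "(\<lambda>(x, y). S x y) \<in> noise_measure k \<Otimes>\<^sub>M layer_noise k \<rightarrow>\<^sub>M layer_noise k"
      unfolding S_def by (rule measurable_layer_shift)
    show "(\<lambda>(x, y). ennreal (q x y)) \<in> borel_measurable (noise_measure k \<Otimes>\<^sub>M layer_noise k)"
      using measurable_layer_ratio unfolding q_def by measurable
    show "distr (layer_noise k) (layer_noise k) (S x) = density (layer_noise k) (\<lambda>y. ennreal (q x y))" for x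
      unfolding S_def q_def layer_noise_def by (rule distr_PiM_normal_add[OF finite_layer_coords s])
  qed (rule corrected_noise_measurable, rule measurable_compose[OF correction_ratio_measurable measurable_ennreal])
  define \<Phi> where "\<Phi> = (\<lambda>(x, y). (corrected_noise w k x, S (corrected_noise w k x) y))"
  have \<Phi>: "\<Phi> \<in> \<mu> \<rightarrow>\<^sub>M \<mu>"
  proof -
    have shift: "(\<lambda>(x, y). (x, S x y)) \<in> \<mu> \<rightarrow>\<^sub>M \<mu>"
      using measurable_layer_shift[of w k] unfolding \<mu>_def S_def split_beta'
      by (intro measurable_Pair measurable_fst)
    have correct: "(\<lambda>(x, y). (corrected_noise w k x, y)) \<in> \<mu> \<rightarrow>\<^sub>M \<mu>"
      unfolding \<mu>_def split_beta' by measurable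
    have "(\<lambda>z. (\<lambda>(x, y). (x, S x y)) ((\<lambda>(x, y). (corrected_noise w k x, y)) z)) = \<Phi>"
      by (auto simp: \<Phi>_def split_beta')
    with measurable_compose[OF correct shift] show ?thesis by (simp only:)
  qed
  have merge_\<Phi>: "corrected_noise w (Suc k) (m z) = m (\<Phi> z)" for z
    by (cases z) (simp add: m_def \<Phi>_def S_def corrected_noise_merge)
  have ratio_\<Phi>: "ennreal (correction_ratio w k (fst z)) * ennreal (q (fst z) (snd z))
      = ennreal (correction_ratio w (Suc k) (m z))" for z
    using correction_ratio_nonneg q_nn
    by (cases z) (simp add: m_def q_def correction_ratio_merge ennreal_mult)
  have ratio_meas: "(\<lambda>x. ennreal (correction_ratio w j x)) \<in> borel_measurable (noise_measure j)" for j
    by (rule measurable_compose[OF correction_ratio_measurable measurable_ennreal])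
  have NS: "noise_measure (Suc k) = distr \<mu> (noise_measure (Suc k)) m"
    unfolding \<mu>_def m_def by (rule noise_measure_Suc)
  have "distr (noise_measure (Suc k)) (noise_measure (Suc k)) (corrected_noise w (Suc k))
      = distr \<mu> (noise_measure (Suc k)) (corrected_noise w (Suc k) \<circ> m)"
    by (subst NS, rule distr_distr[OF corrected_noise_measurable m])
  also have "\<dots> = distr \<mu> (noise_measure (Suc k)) (m \<circ> \<Phi>)"
    by (rule distr_cong) (simp_all add: merge_\<Phi>)
  also have "\<dots> = distr (distr \<mu> \<mu> \<Phi>) (noise_measure (Suc k)) m"
    by (rule distr_distr[symmetric, OF m \<Phi>])
  also have "distr \<mu> \<mu> \<Phi> = density \<mu> (\<lambda>z. ennreal (correction_ratio w (Suc k) (m z)))"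
    unfolding \<Phi>_def adaptive
  proof (rule density_cong)
    have "(\<lambda>z. ennreal (correction_ratio w k (fst z))) \<in> borel_measurable \<mu>"
      unfolding \<mu>_def by (rule measurable_compose[OF measurable_fst ratio_meas])
    moreover have "(\<lambda>z. ennreal (q (fst z) (snd z))) \<in> borel_measurable \<mu>"
      using measurable_compose[OF measurable_layer_ratio[of w k] measurable_ennreal]
      unfolding \<mu>_def q_def split_beta' .
    ultimately show "(\<lambda>(x, y). ennreal (correction_ratio w k x) * ennreal (q x y)) \<in> borel_measurable \<mu>"
      unfolding split_beta' by (rule borel_measurable_times_ennreal)
    show "(\<lambda>z. ennreal (correction_ratio w (Suc k) (m z))) \<in> borel_measurable \<mu>"
      by (rule measurable_compose[OF m ratio_meas])
  qed (simp add: split_beta' ratio_\<Phi>)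
  also have "distr (density \<mu> (\<lambda>z. ennreal (correction_ratio w (Suc k) (m z)))) (noise_measure (Suc k)) m
      = density (noise_measure (Suc k)) (\<lambda>x. ennreal (correction_ratio w (Suc k) x))"
    by (subst (2) NS, rule density_distr[symmetric, OF ratio_meas m])
  finally show ?case .
qed

lemma nn_integral_correction_ratio_powr_le:
  assumes \<alpha>: "\<alpha> > 1"
  shows "(\<integral>\<^sup>+x. ennreal (correction_ratio w k x powr \<alpha>) \<partial>noise_measure k)
       \<le> ennreal (exp (real k * (\<alpha> * (\<alpha> - 1) / (2 * s\<^sup>2))))"
proof (induction k)
  case 0
  interpret prob_space "noise_measure 0" by (rule prob_space_noise_measure)
  show ?case by (simp add: correction_ratio_def noise_coords_def emeasure_space_1)
next
  case (Suc k)
  define C where "C = \<alpha> * (\<alpha> - 1) / (2 * s\<^sup>2)"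
  define \<mu> where "\<mu> = noise_measure k \<Otimes>\<^sub>M layer_noise k"
  define q where "q x y = (\<Prod>c\<in>layer_coords k. normal_ratio s (correction A' w x c) (y c))" for x y
  interpret layer: prob_space "layer_noise k" by (rule prob_space_layer_noise)
  have m: "merge (noise_coords k) (layer_coords k) \<in> \<mu> \<rightarrow>\<^sub>M noise_measure (Suc k)"
    unfolding \<mu>_def noise_measure_def layer_noise_def noise_coords_Suc by (rule measurable_merge)
  have powr_meas: "(\<lambda>t::real. ennreal (t powr \<alpha>)) \<in> borel_measurable borel" by measurable
  have q_moment: "(\<integral>\<^sup>+y. ennreal (q x y powr \<alpha>) \<partial>layer_noise k) \<le> ennreal (exp C)" for x
  proof -
    have "\<alpha> * (\<alpha> - 1) * (\<Sum>c\<in>layer_coords k. (correction A' w x c)\<^sup>2) \<le> \<alpha> * (\<alpha> - 1) * 1"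
      using \<alpha> sum_square_correction_le[where B=A' and w=w and x=x and k=k] by (intro mult_left_mono) auto
    then have "\<alpha> * (\<alpha> - 1) * (\<Sum>c\<in>layer_coords k. (correction A' w x c)\<^sup>2) / (2 * s\<^sup>2) \<le> C"
      unfolding C_def by (intro divide_right_mono) auto
    then show ?thesis
      unfolding q_def layer_noise_def nn_integral_PiM_normal_ratio_powr[OF finite_layer_coords s]
      by (intro ennreal_leI) simp
  qed
  have "(\<integral>\<^sup>+x. ennreal (correction_ratio w (Suc k) x powr \<alpha>) \<partial>noise_measure (Suc k))
      = (\<integral>\<^sup>+z. ennreal (correction_ratio w (Suc k) (merge (noise_coords k) (layer_coords k) z) powr \<alpha>) \<partial>\<mu>)"
    by (subst noise_measure_Suc, unfold \<mu>_def[symmetric])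
       (rule nn_integral_distr[OF m], unfold measurable_distr_eq1,
        rule measurable_compose[OF correction_ratio_measurable powr_meas])
  also have "\<dots> = (\<integral>\<^sup>+z. ennreal ((correction_ratio w k (fst z) * q (fst z) (snd z)) powr \<alpha>) \<partial>\<mu>)"
    by (intro nn_integral_cong) (auto simp: correction_ratio_merge q_def)
  also have "\<dots> \<le> (\<integral>\<^sup>+x. ennreal (correction_ratio w k x powr \<alpha>) \<partial>noise_measure k) * ennreal (exp C)"
    unfolding \<mu>_def
  proof (rule nn_integral_pair_mult_powr_le[OF layer.sigma_finite_measure_axioms correction_ratio_measurable
      correction_ratio_nonneg])
    show "(\<lambda>(x, y). q x y) \<in> borel_measurable (noise_measure k \<Otimes>\<^sub>M layer_noise k)"
      unfolding q_def by (rule measurable_layer_ratio)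
    show "q x y \<ge> 0" for x y
      unfolding q_def using normal_ratio_pos[OF s] by (intro prod_nonneg) (auto intro: less_imp_le)
  qed (rule q_moment)
  also have "\<dots> \<le> ennreal (exp (real k * C)) * ennreal (exp C)"
    using Suc.IH unfolding C_def by (rule mult_right_mono) simp
  also have "\<dots> = ennreal (exp (real (Suc k) * C))"
    by (simp add: ennreal_mult[symmetric] exp_add[symmetric] algebra_simps)
  finally show ?case unfolding C_def .
qed


definition noise_shift :: "nat \<Rightarrow> 'w \<Rightarrow> (nat \<Rightarrow> nat \<Rightarrow> nat \<Rightarrow> real) \<Rightarrow> nat \<Rightarrow> nat \<Rightarrow> nat \<Rightarrow> real" where
  "noise_shift L w N =
     (\<lambda>l i j. N l i j + (if l < L \<and> i = i0 \<and> j < d then edge_diff * gap_H n d f A X w N l k0 j else 0))"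

definition noise_shift_ratio :: "nat \<Rightarrow> 'w \<Rightarrow> (nat \<Rightarrow> nat \<Rightarrow> nat \<Rightarrow> real) \<Rightarrow> real" where
  "noise_shift_ratio L w N = correction_ratio w L (\<lambda>(l, i, j). N l i j)"

definition noise_embed :: "nat \<Rightarrow> (nat \<times> nat \<times> nat \<Rightarrow> real) \<Rightarrow> nat \<Rightarrow> nat \<Rightarrow> nat \<Rightarrow> real" where
  "noise_embed L y = (\<lambda>l i j. if l < L \<and> i < n \<and> j < d then y (l, i, j) else 0)"

lemma gauss_noise_eq_distr: "gauss_noise L n d s = distr (noise_measure L) NoiseS (noise_embed L)"
  unfolding gauss_noise_def noise_measure_def noise_coords_def normal_measure_def noise_embed_def ..

lemma gap_Z_noise_shift: "gap_Z L n d f A' X w (noise_shift L w N) = gap_Z L n d f A X w N"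
proof (intro ext)
  fix i c
  have H: "gap_H n d f A' X w (noise_shift L w N) l = gap_H n d f A X w N l" if "l \<le> L" for l
    by (rule gap_H_edge_flip[where K=L]) (use that in \<open>auto simp: noise_shift_def\<close>)
  show "gap_Z L n d f A' X w (noise_shift L w N) i c = gap_Z L n d f A X w N i c"
  proof (cases "i < n \<and> c < (L + 1) * d")
    case True
    then have "c div d < L + 1" by (intro less_mult_imp_div_less) simp
    then show ?thesis using True H[of "c div d"] by (simp add: gap_Z_def)
  qed (auto simp: gap_Z_def)
qed

lemma correction_ratio_cong:
  assumes "\<And>c. c \<in> noise_coords k \<Longrightarrow> x c = x' c"
  shows "correction_ratio w k x = correction_ratio w k x'"
  unfolding correction_ratio_def
proof (intro prod.cong refl)
  fix c assume c: "c \<in> noise_coords k"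
  obtain l i j where cc: "c = (l, i, j)" by (cases c) auto
  have "correction A' w x (l, i, j) = correction A' w x' (l, i, j)"
    by (rule correction_cong) (use c cc assms in \<open>auto simp: noise_coords_def\<close>)
  then show "normal_ratio s (correction A' w x c) (x c) = normal_ratio s (correction A' w x' c) (x' c)"
    using assms[OF c] cc by simp
qed

lemma borel_measurable_noise_shift:
  assumes fW: "\<And>i j. (\<lambda>\<omega>. f (W \<omega>) (X i) j) \<in> borel_measurable M"
    and FN: "\<And>l i j. (\<lambda>\<omega>. F \<omega> l i j) \<in> borel_measurable M"
  shows "(\<lambda>\<omega>. noise_shift L (W \<omega>) (F \<omega>)) \<in> M \<rightarrow>\<^sub>M NoiseS"
proof (rule measurable_NoiseS)
  fix l i j
  have [measurable]: "(\<lambda>\<omega>. gap_H n d f A X (W \<omega>) (F \<omega>) l k0 j) \<in> borel_measurable M"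
    by (rule borel_measurable_gap_H[where f=f and X=X and W=W and F=F, OF fW FN])
  note FN[measurable]
  show "(\<lambda>\<omega>. noise_shift L (W \<omega>) (F \<omega>) l i j) \<in> borel_measurable M"
    unfolding noise_shift_def by measurable
qed

lemma borel_measurable_noise_shift_ratio:
  assumes fW: "\<And>i j. (\<lambda>\<omega>. f (W \<omega>) (X i) j) \<in> borel_measurable M"
    and FN: "\<And>l i j. (\<lambda>\<omega>. F \<omega> l i j) \<in> borel_measurable M"
  shows "(\<lambda>\<omega>. noise_shift_ratio L (W \<omega>) (F \<omega>)) \<in> borel_measurable M"
proof -
  have comp: "(\<lambda>\<omega>. (\<lambda>(l, i, j). F \<omega> l i j) c) \<in> borel_measurable M" for c
    by (cases c) (simp add: FN)
  show ?thesis
    unfolding noise_shift_ratio_def correction_ratio_def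
    by (rule borel_measurable_prod, rule borel_measurable_normal_ratio,
        rule borel_measurable_correction[OF comp fW], rule comp)
qed

lemma noise_embed_measurable: "noise_embed L \<in> noise_measure L \<rightarrow>\<^sub>M NoiseS"
proof (rule measurable_NoiseS)
  fix l i j
  have [measurable]: "(\<lambda>x. x (l, i, j)) \<in> borel_measurable (noise_measure L)"
    unfolding noise_measure_def by (rule PiM_normal_component)
  show "(\<lambda>x. noise_embed L x l i j) \<in> borel_measurable (noise_measure L)"
    unfolding noise_embed_def by measurable
qed

lemma noise_shift_measurable: "noise_shift L w \<in> NoiseS \<rightarrow>\<^sub>M NoiseS"
  by (rule borel_measurable_noise_shift[where W="\<lambda>_. w" and F="\<lambda>N. N"])
     (rule borel_measurable_const, rule NoiseS_component)

lemma noise_shift_ratio_measurable: "noise_shift_ratio L w \<in> borel_measurable NoiseS"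
  by (rule borel_measurable_noise_shift_ratio[where W="\<lambda>_. w" and F="\<lambda>N. N"])
     (rule borel_measurable_const, rule NoiseS_component)

lemma noise_shift_embed:
  assumes "y \<in> space (noise_measure L)"
  shows "noise_shift L w (noise_embed L y) = noise_embed L (corrected_noise w L y)"
proof (intro ext)
  fix l i j
  have H: "gap_H n d f A X w (noise_embed L y) l = gap_H n d f A X w (noise_of y) l" if "l < L"
    by (rule gap_H_cong_noise) (use that in \<open>auto simp: noise_embed_def noise_of_def\<close>)
  show "noise_shift L w (noise_embed L y) l i j = noise_embed L (corrected_noise w L y) l i j"
  proof (cases "l < L \<and> i < n \<and> j < d")
    case True
    then have "(l, i, j) \<in> noise_coords L" by (simp add: noise_coords_def)
    then show ?thesis using True H
      by (simp add: noise_shift_def noise_embed_def corrected_noise_def correction_def)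
  next
    case False
    then show ?thesis using i0 by (auto simp: noise_shift_def noise_embed_def)
  qed
qed

lemma noise_shift_ratio_embed: "noise_shift_ratio L w (noise_embed L y) = correction_ratio w L y"
  unfolding noise_shift_ratio_def by (rule correction_ratio_cong) (auto simp: noise_embed_def noise_coords_def)

lemma distr_gauss_noise_shift:
  "distr (gauss_noise L n d s) NoiseS (noise_shift L w)
 = density (gauss_noise L n d s) (\<lambda>N. ennreal (noise_shift_ratio L w N))"
proof -
  have ratio_meas: "(\<lambda>N. ennreal (noise_shift_ratio L w N)) \<in> borel_measurable NoiseS"
    by (rule measurable_compose[OF noise_shift_ratio_measurable measurable_ennreal])
  have "distr (gauss_noise L n d s) NoiseS (noise_shift L w)
      = distr (noise_measure L) NoiseS (noise_shift L w \<circ> noise_embed L)"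
    unfolding gauss_noise_eq_distr by (rule distr_distr[OF noise_shift_measurable noise_embed_measurable])
  also have "\<dots> = distr (noise_measure L) NoiseS (noise_embed L \<circ> corrected_noise w L)"
    by (rule distr_cong) (simp_all add: noise_shift_embed)
  also have "\<dots> = distr (distr (noise_measure L) (noise_measure L) (corrected_noise w L)) NoiseS (noise_embed L)"
    by (rule distr_distr[symmetric, OF noise_embed_measurable corrected_noise_measurable])
  also have "\<dots> = distr (density (noise_measure L) (\<lambda>y. ennreal (noise_shift_ratio L w (noise_embed L y))))
      NoiseS (noise_embed L)"
    unfolding distr_corrected_noise noise_shift_ratio_embed ..
  also have "\<dots> = density (gauss_noise L n d s) (\<lambda>N. ennreal (noise_shift_ratio L w N))"
    unfolding gauss_noise_eq_distr by (rule density_distr[symmetric, OF ratio_meas noise_embed_measurable])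
  finally show ?thesis .
qed

lemma nn_integral_noise_shift_ratio_powr_le:
  assumes "\<alpha> > 1"
  shows "(\<integral>\<^sup>+N. ennreal (noise_shift_ratio L w N powr \<alpha>) \<partial>gauss_noise L n d s)
       \<le> ennreal (exp (real L * (\<alpha> * (\<alpha> - 1) / (2 * s\<^sup>2))))"
proof -
  have powr_meas: "(\<lambda>t::real. ennreal (t powr \<alpha>)) \<in> borel_measurable borel" by measurable
  have "(\<integral>\<^sup>+N. ennreal (noise_shift_ratio L w N powr \<alpha>) \<partial>gauss_noise L n d s)
      = (\<integral>\<^sup>+y. ennreal (noise_shift_ratio L w (noise_embed L y) powr \<alpha>) \<partial>noise_measure L)"
    unfolding gauss_noise_eq_distr
    by (rule nn_integral_distr[OF noise_embed_measurable], unfold measurable_distr_eq1,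
        rule measurable_compose[OF noise_shift_ratio_measurable powr_meas])
  also have "\<dots> \<le> ennreal (exp (real L * (\<alpha> * (\<alpha> - 1) / (2 * s\<^sup>2))))"
    unfolding noise_shift_ratio_embed by (rule nn_integral_correction_ratio_powr_le[OF assms])
  finally show ?thesis .
qed

end

definition gap_output ::
  "nat \<Rightarrow> nat \<Rightarrow> nat \<Rightarrow> ('w \<Rightarrow> (nat \<Rightarrow> real) \<Rightarrow> nat \<Rightarrow> real) \<Rightarrow>
   ((nat \<Rightarrow> nat \<Rightarrow> bool) \<Rightarrow> (nat \<Rightarrow> nat \<Rightarrow> real) \<Rightarrow> 't measure) \<Rightarrow> ('t \<Rightarrow> (nat \<Rightarrow> real) \<Rightarrow> 'y) \<Rightarrow>
   'w measure \<Rightarrow> 't measure \<Rightarrow> 'y measure \<Rightarrow> (nat \<Rightarrow> nat \<Rightarrow> real) \<Rightarrow> (nat \<Rightarrow> nat \<Rightarrow> bool) \<Rightarrow>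
   (nat \<Rightarrow> nat \<Rightarrow> bool) \<Rightarrow> nat \<Rightarrow> 'w \<times> (nat \<Rightarrow> nat \<Rightarrow> nat \<Rightarrow> real) \<Rightarrow> ('y \<times> ('w \<times> 't)) measure" where
  "gap_output L n d f B g MW MT MY X Y A v z =
     bind (B Y (gap_Z L n d f A X (fst z) (snd z))) (\<lambda>\<theta>.
       return (MY \<Otimes>\<^sub>M (MW \<Otimes>\<^sub>M MT)) (g \<theta> (gap_Z L n d f A X (fst z) (snd z) v), (fst z, \<theta>)))"

lemma prob_space_gauss_noise:
  assumes "s > 0" shows "prob_space (gauss_noise L n d s)"
  unfolding gauss_noise_def normal_measure_def[symmetric]
proof (rule prob_space.prob_space_distr[OF prob_space_PiM[OF prob_space_normal_measure[OF assms]]])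
  show "(\<lambda>N l i j. if l < L \<and> i < n \<and> j < d then N (l, i, j) else 0)
      \<in> PiM ({..<L} \<times> {..<n} \<times> {..<d}) (\<lambda>_. normal_measure s) \<rightarrow>\<^sub>M NoiseS"
  proof (rule measurable_NoiseS)
    fix l i j
    show "(\<lambda>N. if l < L \<and> i < n \<and> j < d then N (l, i, j) else 0)
        \<in> borel_measurable (PiM ({..<L} \<times> {..<n} \<times> {..<d}) (\<lambda>_. normal_measure s))"
    proof (cases "l < L \<and> i < n \<and> j < d")
      case False
      then have "(\<lambda>N. if l < L \<and> i < n \<and> j < d then N (l, i, j) else 0) = (\<lambda>N. 0 :: real)" by auto
      then show ?thesis by (simp only: borel_measurable_const)
    qed (simp add: PiM_normal_component)
  qed
qed

lemma sets_gauss_noise[simp]: "sets (gauss_noise L n d s) = sets NoiseS"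
  by (simp add: gauss_noise_def)

lemma measurable_fst_feature:
  assumes "sets W = sets MW" and f_meas: "\<And>x. (\<lambda>w. f w x) \<in> MW \<rightarrow>\<^sub>M RowS"
  shows "(\<lambda>z. f (fst z) x j) \<in> borel_measurable (W \<Otimes>\<^sub>M N)"
proof -
  have "(\<lambda>w. f w x j) \<in> borel_measurable W"
    using measurable_compose[OF f_meas[of x] RowS_component] by (simp add: measurable_cong_sets[OF assms(1) refl])
  then show ?thesis by (rule measurable_compose[OF measurable_fst])
qed

lemma measurable_snd_noise:
  assumes "sets N = sets NoiseS"
  shows "(\<lambda>z. snd z l i j) \<in> borel_measurable (W \<Otimes>\<^sub>M N)"
proof -
  have "(\<lambda>N. N l i j) \<in> borel_measurable N"
    using NoiseS_component by (simp add: measurable_cong_sets[OF assms refl])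
  then show ?thesis by (rule measurable_compose[OF measurable_snd])
qed

lemma measurable_gap_output:
  assumes sW: "sets W = sets MW" and sN: "sets N = sets NoiseS"
    and f_meas: "\<And>x. (\<lambda>w. f w x) \<in> MW \<rightarrow>\<^sub>M RowS"
    and B_kernel: "B Y \<in> MatS \<rightarrow>\<^sub>M prob_algebra MT"
    and g_meas: "(\<lambda>(\<theta>, z). g \<theta> z) \<in> MT \<Otimes>\<^sub>M RowS \<rightarrow>\<^sub>M MY"
  shows "gap_output L n d f B g MW MT MY X Y A v \<in> W \<Otimes>\<^sub>M N \<rightarrow>\<^sub>M prob_algebra (MY \<Otimes>\<^sub>M (MW \<Otimes>\<^sub>M MT))"
proof -
  define Z where "Z z = gap_Z L n d f A X (fst z) (snd z)" for z
  have Z_entry: "(\<lambda>z. Z z i c) \<in> borel_measurable (W \<Otimes>\<^sub>M N)" for i c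
  proof (cases "i < n \<and> c < (L + 1) * d")
    case True
    have "(\<lambda>z. gap_H n d f A X (fst z) (snd z) (c div d) i (c mod d)) \<in> borel_measurable (W \<Otimes>\<^sub>M N)"
      by (rule borel_measurable_gap_H[where W=fst and F=snd, OF measurable_fst_feature[OF sW f_meas]
          measurable_snd_noise[OF sN]])
    then show ?thesis using True by (simp add: Z_def gap_Z_def)
  next
    case False
    then have "(\<lambda>z. Z z i c) = (\<lambda>z. 0)" by (auto simp: Z_def gap_Z_def)
    then show ?thesis by simp
  qed
  have Z: "Z \<in> W \<Otimes>\<^sub>M N \<rightarrow>\<^sub>M MatS" and Zv: "(\<lambda>z. Z z v) \<in> W \<Otimes>\<^sub>M N \<rightarrow>\<^sub>M RowS"
    by (rule measurable_MatS, rule Z_entry, rule measurable_RowS, rule Z_entry)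
  have fst_W: "fst \<in> W \<Otimes>\<^sub>M N \<rightarrow>\<^sub>M MW"
    using measurable_fst[of W N] by (simp only: measurable_cong_sets[OF refl sW])
  have out: "(\<lambda>p. (g (snd p) (Z (fst p) v), (fst (fst p), snd p)))
      \<in> (W \<Otimes>\<^sub>M N) \<Otimes>\<^sub>M MT \<rightarrow>\<^sub>M MY \<Otimes>\<^sub>M (MW \<Otimes>\<^sub>M MT)"
  proof (intro measurable_Pair)
    have "(\<lambda>p. (snd p, Z (fst p) v)) \<in> (W \<Otimes>\<^sub>M N) \<Otimes>\<^sub>M MT \<rightarrow>\<^sub>M MT \<Otimes>\<^sub>M RowS"
      by (intro measurable_Pair measurable_snd measurable_compose[OF measurable_fst Zv])
    from measurable_compose[OF this g_meas]
    show "(\<lambda>p. g (snd p) (Z (fst p) v)) \<in> (W \<Otimes>\<^sub>M N) \<Otimes>\<^sub>M MT \<rightarrow>\<^sub>M MY" by simp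
    show "(\<lambda>p. fst (fst p)) \<in> (W \<Otimes>\<^sub>M N) \<Otimes>\<^sub>M MT \<rightarrow>\<^sub>M MW"
      by (rule measurable_compose[OF measurable_fst fst_W])
  qed (rule measurable_snd)
  have "(\<lambda>(z, \<theta>). return (MY \<Otimes>\<^sub>M (MW \<Otimes>\<^sub>M MT)) (g \<theta> (Z z v), (fst z, \<theta>)))
      \<in> (W \<Otimes>\<^sub>M N) \<Otimes>\<^sub>M MT \<rightarrow>\<^sub>M prob_algebra (MY \<Otimes>\<^sub>M (MW \<Otimes>\<^sub>M MT))"
    using measurable_compose[OF out measurable_return_prob_space] by (simp add: split_beta')
  then show ?thesis
    unfolding gap_output_def Z_def[symmetric]
    by (rule measurable_bind_prob_space2[OF measurable_compose[OF Z B_kernel]])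
qed

lemma gap_mech_eq_bind:
  assumes W: "prob_space (WX X Y)" "sets (WX X Y) = sets MW" and s: "s > 0"
    and f_meas: "\<And>x. (\<lambda>w. f w x) \<in> MW \<rightarrow>\<^sub>M RowS"
    and B_kernel: "B Y \<in> MatS \<rightarrow>\<^sub>M prob_algebra MT"
    and g_meas: "(\<lambda>(\<theta>, z). g \<theta> z) \<in> MT \<Otimes>\<^sub>M RowS \<rightarrow>\<^sub>M MY"
  shows "gap_mech L n d s WX f B g MW MT MY X Y A v
       = bind (WX X Y \<Otimes>\<^sub>M gauss_noise L n d s) (gap_output L n d f B g MW MT MY X Y A v)"
proof -
  interpret W: prob_space "WX X Y" by (rule W(1))
  interpret N: prob_space "gauss_noise L n d s" by (rule prob_space_gauss_noise[OF s])
  interpret pair_prob_space "WX X Y" "gauss_noise L n d s" ..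
  show ?thesis
    unfolding gap_mech_def
    by (subst bind_pair_measure[OF measurable_prob_algebraD[OF measurable_gap_output[where f=f and B=B and Y=Y and g=g,
        OF W(2) sets_gauss_noise f_meas B_kernel g_meas]]]) (simp add: gap_output_def)
qed

context edge_flip
begin

lemma gap_output_noise_shift:
  "gap_output L n d f B g MW MT MY X Y A v (w, N)
 = gap_output L n d f B g MW MT MY X Y A' v (w, noise_shift L w N)"
  by (simp add: gap_output_def gap_Z_noise_shift)

lemma
  assumes sW: "sets W = sets MW" and f_meas: "\<And>x. (\<lambda>w. f w x) \<in> MW \<rightarrow>\<^sub>M RowS"
  shows measurable_pair_noise_shift:
      "(\<lambda>(w, N). noise_shift L w N) \<in> W \<Otimes>\<^sub>M gauss_noise L n d s \<rightarrow>\<^sub>M gauss_noise L n d s"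
    and measurable_pair_noise_shift_ratio:
      "(\<lambda>(w, N). noise_shift_ratio L w N) \<in> borel_measurable (W \<Otimes>\<^sub>M gauss_noise L n d s)"
proof -
  have fW: "(\<lambda>z. f (fst z) (X i) j) \<in> borel_measurable (W \<Otimes>\<^sub>M gauss_noise L n d s)" for i j
    by (rule measurable_fst_feature[OF sW f_meas])
  have FN: "(\<lambda>z. snd z l i j) \<in> borel_measurable (W \<Otimes>\<^sub>M gauss_noise L n d s)" for l i j
    by (rule measurable_snd_noise[OF sets_gauss_noise])
  show "(\<lambda>(w, N). noise_shift L w N) \<in> W \<Otimes>\<^sub>M gauss_noise L n d s \<rightarrow>\<^sub>M gauss_noise L n d s"
    using borel_measurable_noise_shift[where W=fst and F=snd, OF fW FN]
    unfolding split_beta' by (simp only: measurable_cong_sets[OF refl sets_gauss_noise])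
  show "(\<lambda>(w, N). noise_shift_ratio L w N) \<in> borel_measurable (W \<Otimes>\<^sub>M gauss_noise L n d s)"
    using borel_measurable_noise_shift_ratio[where W=fst and F=snd, OF fW FN] unfolding split_beta' .
qed

lemma distr_pair_noise_shift:
  assumes sW: "sets W = sets MW" and f_meas: "\<And>x. (\<lambda>w. f w x) \<in> MW \<rightarrow>\<^sub>M RowS"
  shows "distr (W \<Otimes>\<^sub>M gauss_noise L n d s) (W \<Otimes>\<^sub>M gauss_noise L n d s) (\<lambda>(w, N). (w, noise_shift L w N))
       = density (W \<Otimes>\<^sub>M gauss_noise L n d s) (\<lambda>(w, N). ennreal (noise_shift_ratio L w N))"
proof (rule distr_pair_shear_density)
  show "sigma_finite_measure (gauss_noise L n d s)"
    using prob_space_gauss_noise[OF s] by (rule prob_space_imp_sigma_finite)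
  show "(\<lambda>(w, N). ennreal (noise_shift_ratio L w N)) \<in> borel_measurable (W \<Otimes>\<^sub>M gauss_noise L n d s)"
    using measurable_compose[OF measurable_pair_noise_shift_ratio[OF sW f_meas] measurable_ennreal]
    unfolding split_beta' .
  show "distr (gauss_noise L n d s) (gauss_noise L n d s) (noise_shift L w)
      = density (gauss_noise L n d s) (\<lambda>N. ennreal (noise_shift_ratio L w N))" for w
    by (subst distr_cong[OF refl sets_gauss_noise refl]) (rule distr_gauss_noise_shift)
qed (rule measurable_pair_noise_shift[OF sW f_meas])

lemma nn_integral_pair_noise_shift_ratio_powr_le:
  assumes \<alpha>: "\<alpha> > 1" and W: "prob_space W" "sets W = sets MW"
    and f_meas: "\<And>x. (\<lambda>w. f w x) \<in> MW \<rightarrow>\<^sub>M RowS"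
  shows "(\<integral>\<^sup>+z. ennreal ((case z of (w, N) \<Rightarrow> noise_shift_ratio L w N) powr \<alpha>) \<partial>(W \<Otimes>\<^sub>M gauss_noise L n d s))
       \<le> ennreal (exp (real L * (\<alpha> * (\<alpha> - 1) / (2 * s\<^sup>2))))"
proof -
  interpret W: prob_space W by (rule W(1))
  interpret GN: prob_space "gauss_noise L n d s" by (rule prob_space_gauss_noise[OF s])
  have powr_meas: "(\<lambda>t::real. ennreal (t powr \<alpha>)) \<in> borel_measurable borel" by measurable
  have "(\<integral>\<^sup>+z. ennreal ((case z of (w, N) \<Rightarrow> noise_shift_ratio L w N) powr \<alpha>) \<partial>(W \<Otimes>\<^sub>M gauss_noise L n d s))
      = (\<integral>\<^sup>+w. \<integral>\<^sup>+N. ennreal (noise_shift_ratio L w N powr \<alpha>) \<partial>gauss_noise L n d s \<partial>W)"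
    by (subst GN.nn_integral_fst[symmetric])
       (simp_all add: measurable_compose[OF measurable_pair_noise_shift_ratio[OF W(2) f_meas] powr_meas])
  also have "\<dots> \<le> (\<integral>\<^sup>+w. ennreal (exp (real L * (\<alpha> * (\<alpha> - 1) / (2 * s\<^sup>2)))) \<partial>W)"
    by (intro nn_integral_mono nn_integral_noise_shift_ratio_powr_le[OF \<alpha>])
  also have "\<dots> = ennreal (exp (real L * (\<alpha> * (\<alpha> - 1) / (2 * s\<^sup>2))))" by (simp add: W.emeasure_space_1)
  finally show ?thesis .
qed

lemma gap_mech_edge_flip_eq_bind_density:
  assumes W: "prob_space (WX X Y)" "sets (WX X Y) = sets MW"
    and f_meas: "\<And>x. (\<lambda>w. f w x) \<in> MW \<rightarrow>\<^sub>M RowS"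
    and B_kernel: "B Y \<in> MatS \<rightarrow>\<^sub>M prob_algebra MT"
    and g_meas: "(\<lambda>(\<theta>, z). g \<theta> z) \<in> MT \<Otimes>\<^sub>M RowS \<rightarrow>\<^sub>M MY"
  shows "gap_mech L n d s WX f B g MW MT MY X Y A v
       = bind (density (WX X Y \<Otimes>\<^sub>M gauss_noise L n d s) (\<lambda>(w, N). ennreal (noise_shift_ratio L w N)))
           (gap_output L n d f B g MW MT MY X Y A' v)"
proof -
  define Q0 where "Q0 = WX X Y \<Otimes>\<^sub>M gauss_noise L n d s"
  define shift where "shift = (\<lambda>(w, N). (w, noise_shift L w N))"
  interpret W: prob_space "WX X Y" by (rule W(1))
  interpret GN: prob_space "gauss_noise L n d s" by (rule prob_space_gauss_noise[OF s])
  have \<kappa>: "gap_output L n d f B g MW MT MY X Y A' v \<in> Q0 \<rightarrow>\<^sub>M subprob_algebra (MY \<Otimes>\<^sub>M (MW \<Otimes>\<^sub>M MT))"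
    unfolding Q0_def
    by (rule measurable_prob_algebraD[OF measurable_gap_output[where f=f and B=B and Y=Y and g=g,
          OF W(2) sets_gauss_noise f_meas B_kernel g_meas]])
  have shift: "shift \<in> Q0 \<rightarrow>\<^sub>M Q0"
    using measurable_pair_noise_shift[OF W(2) f_meas]
    unfolding shift_def Q0_def split_beta' by (intro measurable_Pair measurable_fst)
  have "gap_mech L n d s WX f B g MW MT MY X Y A v
      = bind Q0 (\<lambda>z. gap_output L n d f B g MW MT MY X Y A' v (shift z))"
    unfolding gap_mech_eq_bind[where WX=WX and X=X and Y=Y and f=f and B=B and g=g,
        OF W s f_meas B_kernel g_meas] Q0_def[symmetric]
  proof (intro bind_cong refl)
    fix z
    show "gap_output L n d f B g MW MT MY X Y A v z = gap_output L n d f B g MW MT MY X Y A' v (shift z)"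
      by (cases z) (simp add: shift_def gap_output_noise_shift)
  qed
  also have "\<dots> = bind (distr Q0 Q0 shift) (gap_output L n d f B g MW MT MY X Y A' v)"
    by (rule bind_distr[symmetric, OF shift \<kappa>])
       (simp add: Q0_def space_pair_measure W.not_empty GN.not_empty)
  finally show ?thesis
    unfolding Q0_def shift_def distr_pair_noise_shift[OF W(2) f_meas] .
qed

theorem renyi_divergence_gap_mech_le:
  assumes \<alpha>: "\<alpha> > 1"
    and W: "prob_space (WX X Y)" "sets (WX X Y) = sets MW"
    and f_meas: "\<And>x. (\<lambda>w. f w x) \<in> MW \<rightarrow>\<^sub>M RowS"
    and B_kernel: "B Y \<in> MatS \<rightarrow>\<^sub>M prob_algebra MT"
    and g_meas: "(\<lambda>(\<theta>, z). g \<theta> z) \<in> MT \<Otimes>\<^sub>M RowS \<rightarrow>\<^sub>M MY"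
  shows "renyi_divergence \<alpha> (gap_mech L n d s WX f B g MW MT MY X Y A v)
           (gap_mech L n d s WX f B g MW MT MY X Y A' v) \<le> ereal (real L * \<alpha> / (2 * s\<^sup>2))"
proof -
  define Q0 where "Q0 = WX X Y \<Otimes>\<^sub>M gauss_noise L n d s"
  define r where "r = (\<lambda>(w, N). noise_shift_ratio L w N)"
  define \<kappa> where "\<kappa> = gap_output L n d f B g MW MT MY X Y A' v"
  define C where "C = real L * (\<alpha> * (\<alpha> - 1) / (2 * s\<^sup>2))"
  interpret W: prob_space "WX X Y" by (rule W(1))
  interpret GN: prob_space "gauss_noise L n d s" by (rule prob_space_gauss_noise[OF s])
  interpret Q0: pair_prob_space "WX X Y" "gauss_noise L n d s" ..
  have Q0: "prob_space Q0" unfolding Q0_def by (rule Q0.P.prob_space_axioms)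
  have r: "r \<in> borel_measurable Q0"
    unfolding r_def Q0_def by (rule measurable_pair_noise_shift_ratio[OF W(2) f_meas])
  have r_nn: "r z \<ge> 0" for z
    by (simp add: r_def split_beta' noise_shift_ratio_def correction_ratio_nonneg)
  have \<kappa>: "\<kappa> \<in> Q0 \<rightarrow>\<^sub>M prob_algebra (MY \<Otimes>\<^sub>M (MW \<Otimes>\<^sub>M MT))"
    unfolding \<kappa>_def Q0_def
    by (rule measurable_gap_output[where f=f and B=B and Y=Y and g=g, OF W(2) sets_gauss_noise f_meas B_kernel g_meas])
  have density_r: "density Q0 (\<lambda>z. ennreal (r z)) = distr Q0 Q0 (\<lambda>(w, N). (w, noise_shift L w N))"
    unfolding Q0_def r_def distr_pair_noise_shift[OF W(2) f_meas] by (simp add: split_beta')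
  have "prob_space (distr Q0 Q0 (\<lambda>(w, N). (w, noise_shift L w N)))"
    unfolding Q0_def using measurable_pair_noise_shift[OF W(2) f_meas]
    by (intro Q0.P.prob_space_distr measurable_Pair measurable_fst) (simp add: split_beta')
  then have "prob_space (density Q0 (\<lambda>z. ennreal (r z)))" by (simp only: density_r)
  moreover have "(\<integral>\<^sup>+z. ennreal (r z powr \<alpha>) \<partial>Q0) \<le> ennreal (exp C)"
    unfolding r_def Q0_def C_def by (rule nn_integral_pair_noise_shift_ratio_powr_le[OF \<alpha> W f_meas])
  ultimately have "renyi_divergence \<alpha> (bind (density Q0 (\<lambda>z. ennreal (r z))) \<kappa>) (bind Q0 \<kappa>)
      \<le> ereal (ln (exp C) / (\<alpha> - 1))"
    by (intro renyi_divergence_bind_density_le[OF \<alpha> Q0 _ r r_nn \<kappa>])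
  moreover have "gap_mech L n d s WX f B g MW MT MY X Y A v = bind (density Q0 (\<lambda>z. ennreal (r z))) \<kappa>"
    using gap_mech_edge_flip_eq_bind_density[where WX=WX and Y=Y and B=B and g=g, OF W f_meas B_kernel g_meas]
    by (simp add: Q0_def r_def \<kappa>_def split_beta')
  moreover have "gap_mech L n d s WX f B g MW MT MY X Y A' v = bind Q0 \<kappa>"
    unfolding Q0_def \<kappa>_def
    by (rule gap_mech_eq_bind[where WX=WX and Y=Y and f=f and B=B and g=g, OF W s f_meas B_kernel g_meas])
  moreover have "ln (exp C) / (\<alpha> - 1) = real L * \<alpha> / (2 * s\<^sup>2)"
    using \<alpha> by (simp add: C_def)
  ultimately show ?thesis by simp
qed

end

theorem corollaryH4:
  fixes \<alpha> s :: real and L n m d :: nat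
    and WX :: "(nat \<Rightarrow> nat \<Rightarrow> real) \<Rightarrow> (nat \<Rightarrow> nat \<Rightarrow> bool) \<Rightarrow> 'w measure"
    and f :: "'w \<Rightarrow> (nat \<Rightarrow> real) \<Rightarrow> (nat \<Rightarrow> real)"
    and B :: "(nat \<Rightarrow> nat \<Rightarrow> bool) \<Rightarrow> (nat \<Rightarrow> nat \<Rightarrow> real) \<Rightarrow> 't measure"
    and g :: "'t \<Rightarrow> (nat \<Rightarrow> real) \<Rightarrow> 'y"
    and MW :: "'w measure" and MT :: "'t measure" and MY :: "'y measure"
  assumes "\<alpha> > 1" and "s > 0" and "L \<ge> 1"
    and WX: "\<And>X Y. prob_space (WX X Y) \<and> sets (WX X Y) = sets MW"
    and f_meas: "\<And>x. (\<lambda>w. f w x) \<in> MW \<rightarrow>\<^sub>M RowS"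
    and B_kernel: "\<And>Y. B Y \<in> MatS \<rightarrow>\<^sub>M prob_algebra MT"
    and g_meas: "(\<lambda>(\<theta>, z). g \<theta> z) \<in> MT \<Otimes>\<^sub>M RowS \<rightarrow>\<^sub>M MY"
  shows "edge_GDP n m \<alpha> (real L * \<alpha> / (2 * s\<^sup>2))
           (gap_mech L n d s WX f B g MW MT MY)"
  unfolding edge_GDP_def
proof (intro allI impI)
  fix v X Y A A'
  assume "m \<le> v \<and> v < n \<and> edge_adjacent n A A'"
  then have "card {(i, k). i < n \<and> k < n \<and> A i k \<noteq> A' i k} = 1" by (simp add: edge_adjacent_def)
  then obtain p where "{(i, k). i < n \<and> k < n \<and> A i k \<noteq> A' i k} = {p}"
    by (rule card_1_singletonE)
  moreover obtain i0 k0 where "p = (i0, k0)" by (cases p)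
  ultimately have flip: "{(i, k). i < n \<and> k < n \<and> A i k \<noteq> A' i k} = {(i0, k0)}" by simp
  interpret edge_flip n d f X A A' i0 k0 s
    using flip \<open>s > 0\<close> by unfold_locales (auto simp: set_eq_iff)
  show "renyi_divergence \<alpha> (gap_mech L n d s WX f B g MW MT MY X Y A v)
      (gap_mech L n d s WX f B g MW MT MY X Y A' v) \<le> ereal (real L * \<alpha> / (2 * s\<^sup>2))"
    using WX by (intro renyi_divergence_gap_mech_le \<open>\<alpha> > 1\<close> f_meas B_kernel g_meas) auto
qed

end
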